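(* Let $t\in\mathbb{N}$ and let $G$ be a $t$-circle-bounded colored graph. Then $\mathrm{Aut}(G)\in\Gamma_t$.
   Context: A colored graph is $G=(V,E,c)$ with $c\colon V\to[k]$; its automorphisms are the permutations of $V$ preserving both edges and colors, and $\mathrm{Aut}(G)$ is the group of these. For $i\in[k]$ let $V_i=\{v: c(v)=i\}$ and $V_{<i}=\bigcup_{j<i}V_j$. $G$ is $t$-circle-bounded if for every $i\in[k]$ and every $X\subseteq V_{<i}$ the induced subgraph $G_{i,X}:=G[\{v\in V_i \mid N(v)\cap V_{<i}=X\}]$ is the disjoint union of at most $t$ connected graphs each of maximum degree at most two. For $d\in\mathbb{N}$, $\Gamma_d$ is the class of finite groups all of whose non-abelian composition factors are isomorphic to subgroups of the symmetric group $S_d$. *)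

theory Defs
  imports "HOL-Algebra.Sym_Groups" "HOL-Algebra.SimpleGroups"
begin

definition colored_graph :: "'a set \<Rightarrow> 'a set set \<Rightarrow> ('a \<Rightarrow> nat) \<Rightarrow> nat \<Rightarrow> bool" where
  "colored_graph V E c k \<longleftrightarrow>
     finite V \<and> (\<forall>e\<in>E. \<exists>u v. e = {u, v} \<and> u \<in> V \<and> v \<in> V \<and> u \<noteq> v) \<and>
     (\<forall>v\<in>V. c v \<in> {1..k})"

definition nbhd :: "'a set \<Rightarrow> 'a set set \<Rightarrow> 'a \<Rightarrow> 'a set" where
  "nbhd V E v = {u \<in> V. {u, v} \<in> E}"

definition color_class :: "'a set \<Rightarrow> ('a \<Rightarrow> nat) \<Rightarrow> nat \<Rightarrow> 'a set" where
  "color_class V c i = {v \<in> V. c v = i}"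

definition color_below :: "'a set \<Rightarrow> ('a \<Rightarrow> nat) \<Rightarrow> nat \<Rightarrow> 'a set" where
  "color_below V c i = {v \<in> V. c v < i}"

definition GiX :: "'a set \<Rightarrow> 'a set set \<Rightarrow> ('a \<Rightarrow> nat) \<Rightarrow> nat \<Rightarrow> 'a set \<Rightarrow> 'a set" where
  "GiX V E c i X = {v \<in> color_class V c i. nbhd V E v \<inter> color_below V c i = X}"

definition conn_rel :: "'a set set \<Rightarrow> 'a set \<Rightarrow> ('a \<times> 'a) set" where
  "conn_rel E W = {(u, v). u \<in> W \<and> v \<in> W \<and>
      (u, v) \<in> ({(x, y). x \<in> W \<and> y \<in> W \<and> {x, y} \<in> E})\<^sup>*}"

definition components :: "'a set set \<Rightarrow> 'a set \<Rightarrow> 'a set set" where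
  "components E W = W // conn_rel E W"

definition few_paths_cycles :: "nat \<Rightarrow> 'a set set \<Rightarrow> 'a set \<Rightarrow> bool" where
  "few_paths_cycles t E W \<longleftrightarrow>
     card (components E W) \<le> t \<and> (\<forall>v\<in>W. card {u \<in> W. {u, v} \<in> E} \<le> 2)"

definition circle_bounded :: "nat \<Rightarrow> 'a set \<Rightarrow> 'a set set \<Rightarrow> ('a \<Rightarrow> nat) \<Rightarrow> nat \<Rightarrow> bool" where
  "circle_bounded t V E c k \<longleftrightarrow>
     (\<forall>i\<in>{1..k}. \<forall>X. X \<subseteq> color_below V c i \<longrightarrow> few_paths_cycles t E (GiX V E c i X))"

definition automorphisms :: "'a set \<Rightarrow> 'a set set \<Rightarrow> ('a \<Rightarrow> nat) \<Rightarrow> ('a \<Rightarrow> 'a) set" where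
  "automorphisms V E c = {\<pi>. \<pi> permutes V \<and>
      (\<forall>u\<in>V. \<forall>v\<in>V. {\<pi> u, \<pi> v} \<in> E \<longleftrightarrow> {u, v} \<in> E) \<and> (\<forall>v\<in>V. c (\<pi> v) = c v)}"

definition Aut :: "'a set \<Rightarrow> 'a set set \<Rightarrow> ('a \<Rightarrow> nat) \<Rightarrow> ('a \<Rightarrow> 'a) monoid" where
  "Aut V E c = \<lparr> carrier = automorphisms V E c, mult = (\<circ>), one = id \<rparr>"

definition composition_series :: "('a, 'b) monoid_scheme \<Rightarrow> 'a set list \<Rightarrow> bool" where
  "composition_series G Hs \<longleftrightarrow>
     Hs \<noteq> [] \<and> hd Hs = {\<one>\<^bsub>G\<^esub>} \<and> last Hs = carrier G \<and>
     (\<forall>H\<in>set Hs. subgroup H G) \<and>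
     (\<forall>i. Suc i < length Hs \<longrightarrow>
        Hs ! i \<lhd> G\<lparr>carrier := Hs ! Suc i\<rparr> \<and>
        simple_group (G\<lparr>carrier := Hs ! Suc i\<rparr> Mod (Hs ! i)))"

definition composition_factors :: "('a, 'b) monoid_scheme \<Rightarrow> 'a set monoid set" where
  "composition_factors G = {F. \<exists>Hs i. composition_series G Hs \<and> Suc i < length Hs \<and>
        F = G\<lparr>carrier := Hs ! Suc i\<rparr> Mod (Hs ! i)}"

definition iso_to_subgroup_of_Sym :: "('c, 'd) monoid_scheme \<Rightarrow> nat \<Rightarrow> bool" where
  "iso_to_subgroup_of_Sym F d \<longleftrightarrow>
     (\<exists>H. subgroup H (sym_group d) \<and> F \<cong> (sym_group d)\<lparr>carrier := H\<rparr>)"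

definition Gamma :: "nat \<Rightarrow> ('a, 'b) monoid_scheme \<Rightarrow> bool" where
  "Gamma d G \<longleftrightarrow> group G \<and> finite (carrier G) \<and>
     (\<forall>F\<in>composition_factors G. \<not> comm_group F \<longrightarrow> iso_to_subgroup_of_Sym F d)"

end

theory Submission
  imports Defs "HOL-Combinatorics.Orbits"
begin

text \<open>
  A composition factor of Aut(G) is a simple group S that is a homomorphic image of a subgroup A
  of Aut(G) \<subseteq> Sym(V); assume S is non-abelian. Let i be the least colour of a vertex x moved by A
  and X the set of neighbours of x of colour below i. Since A fixes every vertex of colour below i,
  it leaves C = V_{i,X} invariant, and S is a quotient either of the pointwise stabiliser of C,
  which moves fewer vertices, or of the group induced on C. In the second case S is a quotient of
  a group of automorphisms of a disjoint union of at most t paths and cycles. On a single path or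
  cycle the automorphisms preserving the direction of travel along the edges commute and form a
  subgroup of index at most two, so the kernel of the action on the components has only abelian
  simple quotients, and S is a quotient of a subgroup of Sym(components) \<le> S_t. Finally, a simple
  quotient of a subgroup of S_m embeds into S_m: reduce along invariant subsets, along point
  stabilisers when the kernel N of the quotient map is transitive (Frattini argument), and along the
  block system of N-orbits otherwise.
\<close>

definition perm_group :: "('b \<Rightarrow> 'b) set \<Rightarrow> ('b \<Rightarrow> 'b) monoid" where
  "perm_group A = \<lparr>carrier = A, mult = (\<circ>), one = id\<rparr>"

definition Perm :: "'b set \<Rightarrow> ('b \<Rightarrow> 'b) monoid" where
  "Perm \<Omega> = perm_group {p. p permutes \<Omega>}"

lemma perm_group_simps [simp]:
  "carrier (perm_group A) = A" "mult (perm_group A) = (\<circ>)" "one (perm_group A) = id"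
  by (simp_all add: perm_group_def)

lemma Perm_simps [simp]:
  "carrier (Perm \<Omega>) = {p. p permutes \<Omega>}" "mult (Perm \<Omega>) = (\<circ>)" "one (Perm \<Omega>) = id"
  by (simp_all add: Perm_def)

lemma perm_group_carrier_update [simp]: "(perm_group A)\<lparr>carrier := B\<rparr> = perm_group B"
  by (simp add: perm_group_def)

lemma Perm_carrier_update [simp]: "(Perm \<Omega>)\<lparr>carrier := A\<rparr> = perm_group A"
  by (simp add: Perm_def)

lemma sym_group_eq_Perm: "sym_group n = Perm {1..n}"
  by (simp add: sym_group_def Perm_def perm_group_def)

lemma group_Perm: "group (Perm \<Omega>)"
proof (rule groupI)
  show "\<exists>q\<in>carrier (Perm \<Omega>). q \<otimes>\<^bsub>Perm \<Omega>\<^esub> p = \<one>\<^bsub>Perm \<Omega>\<^esub>" if "p \<in> carrier (Perm \<Omega>)" for p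
    using that permutes_inv permutes_inv_o(2) by fastforce
qed (auto simp: permutes_compose permutes_id comp_assoc)

lemma Perm_inv [simp]:
  assumes "p permutes \<Omega>"
  shows "inv\<^bsub>Perm \<Omega>\<^esub> p = inv' p"
  using group.inv_equality[OF group_Perm] permutes_inv[OF assms] permutes_inv_o(2)[OF assms] assms
  by simp

lemma subgroup_PermI:
  assumes "A \<subseteq> {p. p permutes \<Omega>}" "id \<in> A"
    and "\<And>p q. p \<in> A \<Longrightarrow> q \<in> A \<Longrightarrow> p \<circ> q \<in> A" "\<And>p. p \<in> A \<Longrightarrow> inv' p \<in> A"
  shows "subgroup A (Perm \<Omega>)"
  using assms by (intro group.subgroupI[OF group_Perm]) auto

context
  fixes A :: "('b \<Rightarrow> 'b) set" and \<Omega> :: "'b set"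
  assumes A: "subgroup A (Perm \<Omega>)"
begin

lemma subgroup_Perm_permutes: "a \<in> A \<Longrightarrow> a permutes \<Omega>"
  using subgroup.subset[OF A] by auto

lemma subgroup_Perm_id: "id \<in> A"
  using subgroup.one_closed[OF A] by simp

lemma subgroup_Perm_comp: "p \<in> A \<Longrightarrow> q \<in> A \<Longrightarrow> p \<circ> q \<in> A"
  using subgroup.m_closed[OF A] by simp

lemma subgroup_Perm_inv: "p \<in> A \<Longrightarrow> inv' p \<in> A"
  using subgroup.m_inv_closed[OF A] subgroup_Perm_permutes by fastforce

lemma group_perm_group: "group (perm_group A)"
  using group.subgroup_imp_group[OF group_Perm A] by simp

lemma perm_group_inv [simp]: "a \<in> A \<Longrightarrow> inv\<^bsub>perm_group A\<^esub> a = inv' a"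
  using group.inv_equality[OF group_perm_group] subgroup_Perm_inv subgroup_Perm_permutes
    permutes_inv_o(2) by fastforce

lemma group_hom_perm_group: "group S \<Longrightarrow> h \<in> hom (perm_group A) S \<Longrightarrow> group_hom (perm_group A) S h"
  using group_perm_group by (simp add: group_hom_def group_hom_axioms_def)

end

lemma subgroup_Perm_subset: "\<Omega>' \<subseteq> \<Omega> \<Longrightarrow> subgroup {p. p permutes \<Omega>'} (Perm \<Omega>)"
  by (rule subgroup_PermI) (auto intro: permutes_subset permutes_compose permutes_inv permutes_id)

definition moved_points :: "('b \<Rightarrow> 'b) set \<Rightarrow> 'b set" where
  "moved_points A = {x. \<exists>a\<in>A. a x \<noteq> x}"

lemma moved_points_empty_iff: "moved_points A = {} \<longleftrightarrow> A \<subseteq> {id}"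
  by (auto simp: moved_points_def fun_eq_iff)

lemma moved_points_subset: "(\<And>a. a \<in> A \<Longrightarrow> a permutes \<Omega>) \<Longrightarrow> moved_points A \<subseteq> \<Omega>"
  by (auto simp: moved_points_def dest: permutes_not_in)

definition quotient_of_subgroup :: "('s, 'c) monoid_scheme \<Rightarrow> ('b, 'd) monoid_scheme \<Rightarrow> 'b set \<Rightarrow> bool" where
  "quotient_of_subgroup S G A \<longleftrightarrow>
     subgroup A G \<and> (\<exists>h. h \<in> hom (G\<lparr>carrier := A\<rparr>) S \<and> h ` A = carrier S)"

lemma hom_carrier_subset:
  "h \<in> hom (G\<lparr>carrier := A\<rparr>) S \<Longrightarrow> B \<subseteq> A \<Longrightarrow> h \<in> hom (G\<lparr>carrier := B\<rparr>) S"
  unfolding hom_def by auto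

lemma quotient_of_subgroup_subset:
  assumes "subgroup B G" "B \<subseteq> A" "h \<in> hom (G\<lparr>carrier := A\<rparr>) S" "h ` B = carrier S"
  shows "quotient_of_subgroup S G B"
  using assms hom_carrier_subset unfolding quotient_of_subgroup_def by blast

lemma hom_factor_through_image:
  assumes G: "group G" and H: "group H" and S: "group S"
    and \<phi>: "\<phi> \<in> hom G H" and h: "h \<in> hom G S"
    and ker: "\<And>a. a \<in> carrier G \<Longrightarrow> \<phi> a = \<one>\<^bsub>H\<^esub> \<Longrightarrow> h a = \<one>\<^bsub>S\<^esub>"
  obtains h' where "h' \<in> hom (H\<lparr>carrier := \<phi> ` carrier G\<rparr>) S" "\<And>a. a \<in> carrier G \<Longrightarrow> h' (\<phi> a) = h a"
proof
  interpret \<phi>: group_hom G H \<phi> using G H \<phi> by (simp add: group_hom_def group_hom_axioms_def)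
  interpret h: group_hom G S h using G S h by (simp add: group_hom_def group_hom_axioms_def)
  have h_eq: "h a = h b" if "a \<in> carrier G" "b \<in> carrier G" "\<phi> a = \<phi> b" for a b
  proof -
    have "\<phi> (a \<otimes>\<^bsub>G\<^esub> inv\<^bsub>G\<^esub> b) = \<one>\<^bsub>H\<^esub>"
      using that by simp
    then have "h a \<otimes>\<^bsub>S\<^esub> inv\<^bsub>S\<^esub> h b = \<one>\<^bsub>S\<^esub>"
      using that ker[of "a \<otimes>\<^bsub>G\<^esub> inv\<^bsub>G\<^esub> b"] by simp
    then show ?thesis
      using that by (simp add: h.H.inv_solve_right')
  qed
  define h' where "h' = h \<circ> inv_into (carrier G) \<phi>"
  show h'_\<phi>: "h' (\<phi> a) = h a" if "a \<in> carrier G" for a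
  proof -
    have "h (inv_into (carrier G) \<phi> (\<phi> a)) = h a"
      using that by (intro h_eq) (auto intro: inv_into_into f_inv_into_f)
    then show ?thesis by (simp add: h'_def)
  qed
  show "h' \<in> hom (H\<lparr>carrier := \<phi> ` carrier G\<rparr>) S"
  proof (rule homI)
    fix x y assume "x \<in> carrier (H\<lparr>carrier := \<phi> ` carrier G\<rparr>)" "y \<in> carrier (H\<lparr>carrier := \<phi> ` carrier G\<rparr>)"
    then obtain a b where "a \<in> carrier G" "b \<in> carrier G" "x = \<phi> a" "y = \<phi> b" by auto
    then show "h' (x \<otimes>\<^bsub>H\<lparr>carrier := \<phi> ` carrier G\<rparr>\<^esub> y) = h' x \<otimes>\<^bsub>S\<^esub> h' y"
      by (simp add: h'_\<phi> flip: \<phi>.hom_mult)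
  qed (auto simp: h'_\<phi>)
qed

lemma quotient_of_subgroup_image:
  assumes G: "group G" and H: "group H" and S: "group S"
    and A: "subgroup A G" and h: "h \<in> hom (G\<lparr>carrier := A\<rparr>) S" "h ` A = carrier S"
    and \<phi>: "\<phi> \<in> hom (G\<lparr>carrier := A\<rparr>) H"
    and ker: "\<And>a. a \<in> A \<Longrightarrow> \<phi> a = \<one>\<^bsub>H\<^esub> \<Longrightarrow> h a = \<one>\<^bsub>S\<^esub>"
  shows "quotient_of_subgroup S H (\<phi> ` A)"
proof -
  have GA: "group (G\<lparr>carrier := A\<rparr>)" using group.subgroup_imp_group[OF G A] .
  obtain h' where h': "h' \<in> hom (H\<lparr>carrier := \<phi> ` A\<rparr>) S" "\<And>a. a \<in> A \<Longrightarrow> h' (\<phi> a) = h a"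
    by (rule hom_factor_through_image[OF GA H S \<phi> h(1)]) (use ker in auto)
  have "subgroup (\<phi> ` A) H"
    using group_hom.img_is_subgroup[of "G\<lparr>carrier := A\<rparr>" H \<phi>] GA H \<phi>
    by (simp add: group_hom_def group_hom_axioms_def)
  moreover have "h' ` \<phi> ` A = carrier S" using h'(2) h(2) by (simp add: image_image)
  ultimately show ?thesis using h'(1) unfolding quotient_of_subgroup_def by blast
qed

lemma simple_image_of_kernel_cases:
  assumes G: "group G" and H: "group H" and S: "simple_group S"
    and h: "h \<in> hom G S" "h ` carrier G = carrier S" and \<phi>: "\<phi> \<in> hom G H"
  shows "h ` kernel G H \<phi> = carrier S \<or> (\<forall>a\<in>carrier G. \<phi> a = \<one>\<^bsub>H\<^esub> \<longrightarrow> h a = \<one>\<^bsub>S\<^esub>)"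
proof -
  interpret \<phi>: group_hom G H \<phi> using G H \<phi> by (simp add: group_hom_def group_hom_axioms_def)
  interpret S: simple_group S by (rule S)
  have "group_hom G S h" using G S.is_group h(1) by (simp add: group_hom_def group_hom_axioms_def)
  then have "h ` kernel G H \<phi> \<lhd> S"
    using normal.surj_hom_normal_subgroup[OF \<phi>.normal_kernel] h(2) by blast
  then show ?thesis using S.no_real_normal_subgroup by (auto simp: kernel_def)
qed

lemma quotient_of_subgroup_kernel_or_image:
  assumes G: "group G" and H: "group H" and S: "simple_group S"
    and q: "quotient_of_subgroup S G A" and \<phi>: "\<phi> \<in> hom (G\<lparr>carrier := A\<rparr>) H"
  shows "quotient_of_subgroup S G {a \<in> A. \<phi> a = \<one>\<^bsub>H\<^esub>} \<or> quotient_of_subgroup S H (\<phi> ` A)"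
proof -
  obtain h where A: "subgroup A G" and h: "h \<in> hom (G\<lparr>carrier := A\<rparr>) S" "h ` A = carrier S"
    using q unfolding quotient_of_subgroup_def by blast
  have GA: "group (G\<lparr>carrier := A\<rparr>)" using group.subgroup_imp_group[OF G A] .
  have ker: "kernel (G\<lparr>carrier := A\<rparr>) H \<phi> = {a \<in> A. \<phi> a = \<one>\<^bsub>H\<^esub>}" by (simp add: kernel_def)
  have sub: "subgroup {a \<in> A. \<phi> a = \<one>\<^bsub>H\<^esub>} G"
    using group.incl_subgroup[OF G A] group_hom.subgroup_kernel[of "G\<lparr>carrier := A\<rparr>" H \<phi>] GA H \<phi> ker
    by (simp add: group_hom_def group_hom_axioms_def)
  have "h ` carrier (G\<lparr>carrier := A\<rparr>) = carrier S" using h(2) by simp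
  from simple_image_of_kernel_cases[OF GA H S h(1) this \<phi>]
  consider "h ` {a \<in> A. \<phi> a = \<one>\<^bsub>H\<^esub>} = carrier S" | "\<forall>a\<in>A. \<phi> a = \<one>\<^bsub>H\<^esub> \<longrightarrow> h a = \<one>\<^bsub>S\<^esub>"
    unfolding ker by auto
  then show ?thesis
  proof cases
    case 1
    then show ?thesis using quotient_of_subgroup_subset[OF sub _ h(1)] by blast
  next
    case 2
    then show ?thesis
      using quotient_of_subgroup_image[OF G H simple_group.axioms(1)[OF S] A h \<phi>] by blast
  qed
qed

lemma simple_group_not_quotient_of_trivial:
  assumes S: "simple_group S" and q: "quotient_of_subgroup S G A" and "A \<subseteq> {x}"
  shows False
proof -
  obtain h where "h ` A = carrier S" using q unfolding quotient_of_subgroup_def by blast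
  with \<open>A \<subseteq> {x}\<close> have "carrier S \<subseteq> {h x}" by auto
  then have "card (carrier S) \<le> 1" using card_mono[of "{h x}"] by fastforce
  then show False using simple_group.order_gt_one[OF S] by (simp add: order_def)
qed

lemma comm_group_quotient_of_subgroup:
  assumes G: "group G" and S: "group S" and q: "quotient_of_subgroup S G A"
    and comm: "\<And>a b. a \<in> A \<Longrightarrow> b \<in> A \<Longrightarrow> a \<otimes>\<^bsub>G\<^esub> b = b \<otimes>\<^bsub>G\<^esub> a"
  shows "comm_group S"
proof -
  obtain h where A: "subgroup A G" and h: "h \<in> hom (G\<lparr>carrier := A\<rparr>) S" "h ` A = carrier S"
    using q unfolding quotient_of_subgroup_def by blast
  have h_mult: "h (a \<otimes>\<^bsub>G\<^esub> b) = h a \<otimes>\<^bsub>S\<^esub> h b" if "a \<in> A" "b \<in> A" for a b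
    using h(1) that unfolding hom_def by auto
  show ?thesis
  proof (rule group.group_comm_groupI[OF S])
    fix x y assume "x \<in> carrier S" "y \<in> carrier S"
    then obtain a b where "a \<in> A" "b \<in> A" "x = h a" "y = h b" using h(2) by blast
    then show "x \<otimes>\<^bsub>S\<^esub> y = y \<otimes>\<^bsub>S\<^esub> x" using h_mult[of a b] h_mult[of b a] comm[of a b] by simp
  qed
qed

lemma perm_restrict_permutes:
  assumes "p permutes \<Omega>" "finite \<Delta>" "p ` \<Delta> \<subseteq> \<Delta>"
  shows "perm_restrict p \<Delta> permutes \<Delta>"
proof (rule inj_imp_permutes[OF _ assms(2)])
  show "inj_on (perm_restrict p \<Delta>) \<Delta>"
    using permutes_inj_on[OF assms(1)] by (auto simp: inj_on_def perm_restrict_simps)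
qed (use assms(3) in \<open>auto simp: perm_restrict_simps\<close>)

lemma perm_restrict_hom:
  assumes A: "subgroup A (Perm \<Omega>)" and "finite \<Delta>" and inv: "\<And>a. a \<in> A \<Longrightarrow> a ` \<Delta> \<subseteq> \<Delta>"
  shows "(\<lambda>a. perm_restrict a \<Delta>) \<in> hom (perm_group A) (Perm \<Delta>)"
proof (rule homI)
  show "perm_restrict a \<Delta> \<in> carrier (Perm \<Delta>)" if "a \<in> carrier (perm_group A)" for a
    using that perm_restrict_permutes[OF subgroup_Perm_permutes[OF A] assms(2) inv] by simp
  show "perm_restrict (a \<otimes>\<^bsub>perm_group A\<^esub> b) \<Delta> = perm_restrict a \<Delta> \<otimes>\<^bsub>Perm \<Delta>\<^esub> perm_restrict b \<Delta>"
    if "a \<in> carrier (perm_group A)" "b \<in> carrier (perm_group A)" for a b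
    using that inv[of b] by (auto simp: fun_eq_iff perm_restrict_def)
qed

lemma quotient_of_subgroup_restrict_or_fix:
  assumes S: "simple_group S" and q: "quotient_of_subgroup S (Perm \<Omega>) A"
    and "finite \<Delta>" and inv: "\<And>a. a \<in> A \<Longrightarrow> a ` \<Delta> \<subseteq> \<Delta>"
  shows "quotient_of_subgroup S (Perm \<Omega>) {a \<in> A. \<forall>x\<in>\<Delta>. a x = x}
      \<or> quotient_of_subgroup S (Perm \<Delta>) ((\<lambda>a. perm_restrict a \<Delta>) ` A)"
proof -
  have A: "subgroup A (Perm \<Omega>)" using q unfolding quotient_of_subgroup_def by blast
  have \<phi>: "(\<lambda>a. perm_restrict a \<Delta>) \<in> hom ((Perm \<Omega>)\<lparr>carrier := A\<rparr>) (Perm \<Delta>)"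
    using perm_restrict_hom[OF A assms(3) inv] by simp
  have ker: "{a \<in> A. perm_restrict a \<Delta> = \<one>\<^bsub>Perm \<Delta>\<^esub>} = {a \<in> A. \<forall>x\<in>\<Delta>. a x = x}"
    by (auto simp: fun_eq_iff perm_restrict_def)
  show ?thesis
    using quotient_of_subgroup_kernel_or_image[OF group_Perm group_Perm S q \<phi>] unfolding ker .
qed

lemma quotient_of_subgroup_Perm_Diff:
  assumes S: "simple_group S" and "finite \<Omega>" and q: "quotient_of_subgroup S (Perm \<Omega>) A"
    and fixed: "\<And>a x. a \<in> A \<Longrightarrow> x \<in> \<Delta> \<Longrightarrow> a x = x"
  shows "quotient_of_subgroup S (Perm (\<Omega> - \<Delta>)) ((\<lambda>a. perm_restrict a (\<Omega> - \<Delta>)) ` A)"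
proof -
  have A: "subgroup A (Perm \<Omega>)" using q unfolding quotient_of_subgroup_def by blast
  have inv: "a ` (\<Omega> - \<Delta>) \<subseteq> \<Omega> - \<Delta>" if a: "a \<in> A" for a
  proof
    fix y assume "y \<in> a ` (\<Omega> - \<Delta>)"
    then obtain x where x: "x \<in> \<Omega> - \<Delta>" "y = a x" by blast
    have "a x \<notin> \<Delta>"
    proof
      assume "a x \<in> \<Delta>"
      then have "a (a x) = a x" by (rule fixed[OF a])
      then have "a x = x" using permutes_inj[OF subgroup_Perm_permutes[OF A a]] by (auto dest: injD)
      then show False using x \<open>a x \<in> \<Delta>\<close> by simp
    qed
    then show "y \<in> \<Omega> - \<Delta>" using x permutes_in_image[OF subgroup_Perm_permutes[OF A a]] by simp
  qed
  have "a = id" if "a \<in> A" "\<forall>x\<in>\<Omega> - \<Delta>. a x = x" for a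
  proof
    fix x
    show "a x = id x"
    proof (cases "x \<in> \<Delta>")
      case True
      then show ?thesis using fixed[OF that(1)] by simp
    next
      case False
      then show ?thesis
        using that permutes_not_in[OF subgroup_Perm_permutes[OF A that(1)]] by (cases "x \<in> \<Omega>") auto
    qed
  qed
  then have trivial: "{a \<in> A. \<forall>x\<in>\<Omega> - \<Delta>. a x = x} \<subseteq> {id}" by blast
  have "\<not> quotient_of_subgroup S (Perm \<Omega>) {a \<in> A. \<forall>x\<in>\<Omega> - \<Delta>. a x = x}"
    using simple_group_not_quotient_of_trivial[OF S _ trivial] by blast
  moreover have "finite (\<Omega> - \<Delta>)" using assms(2) by simp
  ultimately show ?thesis using quotient_of_subgroup_restrict_or_fix[OF S q _ inv] by blast
qed

text \<open>Induction on the number of moved points: the step only has to exhibit an invariant set \<Delta> meeting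
  the moved points and to handle the group induced on \<Delta>, since the pointwise stabiliser of \<Delta> moves
  fewer points.\<close>
lemma quotient_of_subgroup_Perm_induct:
  assumes S: "simple_group S" and fin: "finite \<Omega>"
    and "quotient_of_subgroup S (Perm \<Omega>) A" and "P A"
    and P_subset: "\<And>A B. P A \<Longrightarrow> B \<subseteq> A \<Longrightarrow> P B"
    and step: "\<And>A. quotient_of_subgroup S (Perm \<Omega>) A \<Longrightarrow> P A \<Longrightarrow> moved_points A \<noteq> {} \<Longrightarrow>
      \<exists>\<Delta>\<subseteq>\<Omega>. \<Delta> \<inter> moved_points A \<noteq> {} \<and> (\<forall>a\<in>A. a ` \<Delta> \<subseteq> \<Delta>) \<and>
        (quotient_of_subgroup S (Perm \<Delta>) ((\<lambda>a. perm_restrict a \<Delta>) ` A) \<longrightarrow> Q)"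
  shows Q
  using assms(3,4)
proof (induction "card (moved_points A)" arbitrary: A rule: less_induct)
  case less
  have moved_\<Omega>: "moved_points A \<subseteq> \<Omega>"
    using less.prems(1) subgroup_Perm_permutes unfolding quotient_of_subgroup_def
    by (intro moved_points_subset) blast
  have "moved_points A \<noteq> {}"
    using simple_group_not_quotient_of_trivial[OF S less.prems(1)] moved_points_empty_iff by blast
  then obtain \<Delta> where \<Delta>: "\<Delta> \<subseteq> \<Omega>" "\<Delta> \<inter> moved_points A \<noteq> {}" "\<forall>a\<in>A. a ` \<Delta> \<subseteq> \<Delta>"
    and Q: "quotient_of_subgroup S (Perm \<Delta>) ((\<lambda>a. perm_restrict a \<Delta>) ` A) \<Longrightarrow> Q"
    using step[OF less.prems] by blast
  have "finite \<Delta>" using \<Delta>(1) fin finite_subset by blast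
  from quotient_of_subgroup_restrict_or_fix[OF S less.prems(1) this] \<Delta>(3)
  consider "quotient_of_subgroup S (Perm \<Omega>) {a \<in> A. \<forall>x\<in>\<Delta>. a x = x}"
    | "quotient_of_subgroup S (Perm \<Delta>) ((\<lambda>a. perm_restrict a \<Delta>) ` A)"
    by blast
  then show ?case
  proof cases
    case 1
    have fin_moved: "finite (moved_points A)" using moved_\<Omega> fin finite_subset by blast
    have "moved_points {a \<in> A. \<forall>x\<in>\<Delta>. a x = x} \<subseteq> moved_points A - \<Delta>"
      unfolding moved_points_def by blast
    then have "card (moved_points {a \<in> A. \<forall>x\<in>\<Delta>. a x = x}) \<le> card (moved_points A - \<Delta>)"
      using fin_moved by (intro card_mono) auto
    also have "\<dots> < card (moved_points A)"
      using \<Delta>(2) by (intro psubset_card_mono[OF fin_moved]) blast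
    finally have fewer: "card (moved_points {a \<in> A. \<forall>x\<in>\<Delta>. a x = x}) < card (moved_points A)" .
    have "P {a \<in> A. \<forall>x\<in>\<Delta>. a x = x}" by (rule P_subset[OF less.prems(2)]) blast
    then show ?thesis by (rule less.hyps[OF fewer 1])
  next
    case 2
    then show ?thesis by (rule Q)
  qed
qed

lemma quotient_of_subgroup_map_permutation:
  assumes S: "group S" and q: "quotient_of_subgroup S (Perm \<Omega>) A" and f: "bij_betw f \<Omega> \<Omega>'"
  shows "quotient_of_subgroup S (Perm \<Omega>') (map_permutation \<Omega> f ` A)"
proof -
  obtain h where A: "subgroup A (Perm \<Omega>)" and h: "h \<in> hom (perm_group A) S" "h ` A = carrier S"
    using q unfolding quotient_of_subgroup_def by auto
  interpret h: group_hom "perm_group A" S h using group_hom_perm_group[OF A S h(1)] .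
  have hom: "map_permutation \<Omega> f \<in> hom (perm_group A) (Perm \<Omega>')"
  proof (rule homI)
    fix a b assume "a \<in> carrier (perm_group A)" "b \<in> carrier (perm_group A)"
    then show "map_permutation \<Omega> f (a \<otimes>\<^bsub>perm_group A\<^esub> b)
        = map_permutation \<Omega> f a \<otimes>\<^bsub>Perm \<Omega>'\<^esub> map_permutation \<Omega> f b"
      using f subgroup_Perm_permutes[OF A] by (simp add: map_permutation_compose' bij_betw_imp_inj_on)
  qed (use f subgroup_Perm_permutes[OF A] in \<open>auto intro: map_permutation_permutes\<close>)
  have ker: "h a = \<one>\<^bsub>S\<^esub>" if a: "a \<in> A" and "map_permutation \<Omega> f a = id" for a
  proof -
    have "a = map_permutation \<Omega>' (inv_into \<Omega> f) (map_permutation \<Omega> f a)"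
      by (rule map_permutation_compose_inv[OF f subgroup_Perm_permutes[OF A a], symmetric])
        (use f in \<open>simp add: bij_betw_inv_into_left\<close>)
    also have "\<dots> = id"
      using that f by (simp add: map_permutation_id' bij_betw_def inj_on_inv_into)
    finally show ?thesis using h.hom_one by simp
  qed
  have "h \<in> hom ((Perm \<Omega>)\<lparr>carrier := A\<rparr>) S"
    and "map_permutation \<Omega> f \<in> hom ((Perm \<Omega>)\<lparr>carrier := A\<rparr>) (Perm \<Omega>')"
    using h(1) hom by simp_all
  then show ?thesis
    by (intro quotient_of_subgroup_image[OF group_Perm group_Perm S A _ h(2)] ker) simp_all
qed

lemma quotient_of_subgroup_sym_group_card:
  assumes "group S" "finite \<Omega>" "quotient_of_subgroup S (Perm \<Omega>) A"
  obtains A' where "quotient_of_subgroup S (sym_group (card \<Omega>)) A'"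
proof -
  obtain f where "bij_betw f \<Omega> {1..card \<Omega>}"
    using bij_betw_iff_card[OF assms(2), of "{1..card \<Omega>}"] by auto
  from quotient_of_subgroup_map_permutation[OF assms(1,3) this] show ?thesis
    by (intro that) (simp add: sym_group_eq_Perm)
qed

definition quotient_of_smaller_sym_group :: "('s, 'c) monoid_scheme \<Rightarrow> nat \<Rightarrow> bool" where
  "quotient_of_smaller_sym_group S n \<longleftrightarrow> (\<exists>m<n. \<exists>A. quotient_of_subgroup S (sym_group m) A)"

lemma quotient_of_smaller_sym_groupI:
  assumes "group S" "finite \<Omega>" "card \<Omega> < n" "quotient_of_subgroup S (Perm \<Omega>) A"
  shows "quotient_of_smaller_sym_group S n"
  using quotient_of_subgroup_sym_group_card[OF assms(1,2,4)] assms(3)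
  unfolding quotient_of_smaller_sym_group_def by blast

lemma iso_perm_group_if_inj:
  assumes A: "subgroup A (Perm \<Omega>)" and S: "group S"
    and h: "h \<in> hom (perm_group A) S" "h ` A = carrier S"
    and inj: "\<And>a. a \<in> A \<Longrightarrow> h a = \<one>\<^bsub>S\<^esub> \<Longrightarrow> a = id"
  shows "S \<cong> perm_group A"
proof -
  interpret h: group_hom "perm_group A" S h using group_hom_perm_group[OF A S h(1)] .
  have "kernel (perm_group A) S h = {\<one>\<^bsub>perm_group A\<^esub>}"
    using inj subgroup_Perm_id[OF A] h.hom_one by (auto simp: kernel_def)
  then have "h \<in> iso (perm_group A) S"
    using h h.inj_iff_trivial_ker by (simp add: iso_iff)
  then show ?thesis using h.G.iso_set_sym is_isoI by blast
qed

lemma iso_to_subgroup_of_Sym_mono: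
  assumes "iso_to_subgroup_of_Sym S m" "m \<le> n"
  shows "iso_to_subgroup_of_Sym S n"
proof -
  obtain H where H: "subgroup H (Perm {1..m})" "S \<cong> perm_group H"
    using assms(1) unfolding iso_to_subgroup_of_Sym_def sym_group_eq_Perm by auto
  have "subgroup H (Perm {1..n})"
    using group.incl_subgroup[OF group_Perm subgroup_Perm_subset[of "{1..m}" "{1..n}"]] H(1) assms(2)
    by (simp add: Perm_def)
  moreover have "(sym_group n)\<lparr>carrier := H\<rparr> = perm_group H" by (simp add: sym_group_eq_Perm)
  ultimately show ?thesis
    using H(2) unfolding iso_to_subgroup_of_Sym_def by (auto simp: sym_group_eq_Perm)
qed

section \<open>Simple quotients of subgroups of symmetric groups\<close>

definition set_action :: "'c set set \<Rightarrow> ('c \<Rightarrow> 'c) \<Rightarrow> 'c set \<Rightarrow> 'c set" where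
  "set_action P f X = (if X \<in> P then f ` X else X)"

lemma set_action_hom:
  assumes "finite P"
    and inj: "\<And>a. a \<in> A \<Longrightarrow> inj (\<phi> a)"
    and closed: "\<And>a X. a \<in> A \<Longrightarrow> X \<in> P \<Longrightarrow> \<phi> a ` X \<in> P"
    and comp: "\<And>a b. a \<in> A \<Longrightarrow> b \<in> A \<Longrightarrow> \<phi> (a \<circ> b) = \<phi> a \<circ> \<phi> b"
  shows "(\<lambda>a. set_action P (\<phi> a)) \<in> hom (perm_group A) (Perm P)"
proof (rule homI)
  fix a assume "a \<in> carrier (perm_group A)"
  then have a: "a \<in> A" by simp
  have "set_action P (\<phi> a) permutes P"
  proof (rule inj_imp_permutes[OF _ assms(1)])
    show "inj_on (set_action P (\<phi> a)) P"
      using inj_image_eq_iff[OF inj[OF a]] by (simp add: inj_on_def set_action_def)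
  qed (use closed[OF a] in \<open>auto simp: set_action_def\<close>)
  then show "set_action P (\<phi> a) \<in> carrier (Perm P)" by simp
next
  fix a b assume "a \<in> carrier (perm_group A)" "b \<in> carrier (perm_group A)"
  then show "set_action P (\<phi> (a \<otimes>\<^bsub>perm_group A\<^esub> b)) = set_action P (\<phi> a) \<otimes>\<^bsub>Perm P\<^esub> set_action P (\<phi> b)"
    using closed[of b] comp[of a b] by (auto simp: fun_eq_iff set_action_def image_comp)
qed

definition group_orbit :: "('b \<Rightarrow> 'b) set \<Rightarrow> 'b \<Rightarrow> 'b set" where
  "group_orbit N x = (\<lambda>n. n x) ` N"

lemma group_orbit_self:
  assumes "subgroup N (Perm \<Omega>)" shows "x \<in> group_orbit N x"
  using subgroup_Perm_id[OF assms] unfolding group_orbit_def by (auto intro: image_eqI[of _ _ id])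

lemma group_orbit_subset: "subgroup N (Perm \<Omega>) \<Longrightarrow> x \<in> \<Omega> \<Longrightarrow> group_orbit N x \<subseteq> \<Omega>"
  using subgroup_Perm_permutes permutes_in_image unfolding group_orbit_def by fastforce

lemma group_orbit_eq:
  assumes N: "subgroup N (Perm \<Omega>)" and n: "n \<in> N"
  shows "group_orbit N (n x) = group_orbit N x"
proof
  show "group_orbit N (n x) \<subseteq> group_orbit N x"
    using subgroup_Perm_comp[OF N _ n] unfolding group_orbit_def by (auto intro!: image_eqI[of _ _ "_ \<circ> n"])
  have "m x = (m \<circ> inv' n) (n x)" for m :: "'a \<Rightarrow> 'a"
    using permutes_inverses(2)[OF subgroup_Perm_permutes[OF N n]] by simp
  then show "group_orbit N x \<subseteq> group_orbit N (n x)"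
    using subgroup_Perm_comp[OF N _ subgroup_Perm_inv[OF N n]] unfolding group_orbit_def by blast
qed

lemma normal_perm_group_imp_subgroup:
  assumes "subgroup A (Perm \<Omega>)" "N \<lhd> perm_group A"
  shows "subgroup N (Perm \<Omega>)"
  using group.incl_subgroup[OF group_Perm assms(1)] normal_imp_subgroup[OF assms(2)] by simp

lemma normal_perm_group_conj:
  assumes A: "subgroup A (Perm \<Omega>)" and N: "N \<lhd> perm_group A" and "a \<in> A" "n \<in> N"
  shows "a \<circ> n \<circ> inv' a \<in> N"
  using N assms(3,4) group.normal_inv_iff[OF group_perm_group[OF A]] perm_group_inv[OF A] by fastforce

lemma image_group_orbit:
  assumes A: "subgroup A (Perm \<Omega>)" and N: "N \<lhd> perm_group A" and a: "a \<in> A"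
  shows "a ` group_orbit N x = group_orbit N (a x)"
proof
  have a_perm: "a permutes \<Omega>" using subgroup_Perm_permutes[OF A a] .
  have "a (n x) = (a \<circ> n \<circ> inv' a) (a x)" for n
    using permutes_inverses(2)[OF a_perm] by simp
  then show "a ` group_orbit N x \<subseteq> group_orbit N (a x)"
    using normal_perm_group_conj[OF A N a] unfolding group_orbit_def by blast
  have "inv' a \<circ> n \<circ> a \<in> N" if "n \<in> N" for n
    using normal_perm_group_conj[OF A N subgroup_Perm_inv[OF A a] that] permutes_inv_inv[OF a_perm]
    by simp
  moreover have "n (a x) = a ((inv' a \<circ> n \<circ> a) x)" for n
    using permutes_inverses(1)[OF a_perm] by simp
  ultimately show "group_orbit N (a x) \<subseteq> a ` group_orbit N x"
    unfolding group_orbit_def by blast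
qed

locale simple_quotient_of_perm_group =
  fixes \<Omega> :: "'b set" and A :: "('b \<Rightarrow> 'b) set"
    and S :: "('s, 'c) monoid_scheme" and h :: "('b \<Rightarrow> 'b) \<Rightarrow> 's"
  assumes finite_\<Omega>: "finite \<Omega>" and subgroup_A: "subgroup A (Perm \<Omega>)"
    and simple_S: "simple_group S"
    and hom_h: "h \<in> hom (perm_group A) S" and h_onto: "h ` A = carrier S"
begin

abbreviation N :: "('b \<Rightarrow> 'b) set" where
  "N \<equiv> kernel (perm_group A) S h"

lemma group_S: "group S"
  using simple_group.axioms(1)[OF simple_S] .

sublocale h: group_hom "perm_group A" S h
  using group_hom_perm_group[OF subgroup_A group_S hom_h] .

lemma hom_h_Perm: "h \<in> hom ((Perm \<Omega>)\<lparr>carrier := A\<rparr>) S"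
  using hom_h by simp

lemma permutes_\<Omega>: "a \<in> A \<Longrightarrow> a permutes \<Omega>"
  using subgroup_Perm_permutes[OF subgroup_A] .

lemma quotient: "quotient_of_subgroup S (Perm \<Omega>) A"
  using subgroup_A hom_h h_onto unfolding quotient_of_subgroup_def Perm_carrier_update by blast

lemma subgroup_N: "subgroup N (Perm \<Omega>)"
  using normal_perm_group_imp_subgroup[OF subgroup_A h.normal_kernel] .

lemma h_inv: "a \<in> A \<Longrightarrow> h (inv' a) = inv\<^bsub>S\<^esub> h a"
  using h.hom_inv[of a] perm_group_inv[OF subgroup_A] by simp

lemma h_comp: "a \<in> A \<Longrightarrow> b \<in> A \<Longrightarrow> h (a \<circ> b) = h a \<otimes>\<^bsub>S\<^esub> h b"
  using h.hom_mult[of a b] by simp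

lemma kernel_times_onto:
  assumes M: "M \<subseteq> A" "h ` M = carrier S" and a: "a \<in> A"
  obtains n m where "n \<in> N" "m \<in> M" "a = n \<circ> m"
proof -
  obtain m where m: "m \<in> M" "h a = h m" using M a h.hom_closed by (metis imageE perm_group_simps(1))
  have mA: "m \<in> A" using m M by blast
  have "a \<circ> inv' m \<in> N"
    using a mA m subgroup_Perm_comp[OF subgroup_A a subgroup_Perm_inv[OF subgroup_A mA]]
    by (simp add: kernel_def h_comp subgroup_Perm_inv[OF subgroup_A] h_inv h.hom_closed)
  moreover have "a = (a \<circ> inv' m) \<circ> m"
    using permutes_inv_o(2)[OF permutes_\<Omega>[OF mA]] by (simp add: comp_assoc)
  ultimately show ?thesis using that m(1) by blast
qed

lemma iso_if_kernel_trivial: "N \<subseteq> {id} \<Longrightarrow> S \<cong> perm_group A"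
  by (rule iso_perm_group_if_inj[OF subgroup_A group_S hom_h h_onto]) (auto simp: kernel_def)

lemma smaller_if_kernel_transitive:
  assumes x: "x \<in> \<Omega>" and transitive: "\<Omega> \<subseteq> group_orbit N x"
  shows "quotient_of_smaller_sym_group S (card \<Omega>)"
proof -
  define A\<^sub>x where "A\<^sub>x = {a \<in> A. a x = x}"
  have subgroup_A\<^sub>x: "subgroup A\<^sub>x (Perm \<Omega>)"
  proof (rule subgroup_PermI)
    show "inv' a \<in> A\<^sub>x" if "a \<in> A\<^sub>x" for a
      using that subgroup_Perm_inv[OF subgroup_A] permutes_inv_eq[OF permutes_\<Omega>] by (auto simp: A\<^sub>x_def)
  qed (use permutes_\<Omega> subgroup_Perm_id[OF subgroup_A] subgroup_Perm_comp[OF subgroup_A] in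
      \<open>auto simp: A\<^sub>x_def\<close>)
  \<comment> \<open>Frattini argument: as N is transitive, A is N times the stabiliser of x.\<close>
  have "carrier S \<subseteq> h ` A\<^sub>x"
  proof
    fix s assume "s \<in> carrier S"
    then obtain a where a: "a \<in> A" "s = h a" using h_onto by auto
    have "a x \<in> group_orbit N x" using transitive permutes_in_image[OF permutes_\<Omega>[OF a(1)]] x by blast
    then obtain n where n: "n \<in> N" "n x = a x" unfolding group_orbit_def by auto
    then have nA: "n \<in> A" "h n = \<one>\<^bsub>S\<^esub>" by (auto simp: kernel_def)
    have "(inv' n \<circ> a) x = x" using permutes_inverses(2)[OF permutes_\<Omega>[OF nA(1)]] by (simp flip: n(2))
    then have "inv' n \<circ> a \<in> A\<^sub>x"
      using subgroup_Perm_comp[OF subgroup_A subgroup_Perm_inv[OF subgroup_A nA(1)] a(1)] by (simp add: A\<^sub>x_def)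
    moreover have "h (inv' n \<circ> a) = h a"
      using nA a(1) subgroup_Perm_inv[OF subgroup_A nA(1)] by (simp add: h_comp h_inv h.hom_closed)
    ultimately show "s \<in> h ` A\<^sub>x" using a(2) by (metis image_eqI)
  qed
  then have "h ` A\<^sub>x = carrier S" using h_onto by (auto simp: A\<^sub>x_def)
  then have "quotient_of_subgroup S (Perm \<Omega>) A\<^sub>x"
    using quotient_of_subgroup_subset[OF subgroup_A\<^sub>x _ hom_h_Perm]
    by (auto simp: A\<^sub>x_def)
  from quotient_of_subgroup_Perm_Diff[OF simple_S finite_\<Omega> this, of "{x}"]
  have "quotient_of_subgroup S (Perm (\<Omega> - {x})) ((\<lambda>a. perm_restrict a (\<Omega> - {x})) ` A\<^sub>x)"
    by (auto simp: A\<^sub>x_def)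
  then show ?thesis
    using quotient_of_smaller_sym_groupI[OF group_S] finite_\<Omega> card_Diff1_less[OF finite_\<Omega> x] by blast
qed

lemma smaller_if_invariant:
  assumes "\<Delta> \<noteq> {}" "\<Delta> \<subset> \<Omega>" and invariant: "\<And>a. a \<in> A \<Longrightarrow> a ` \<Delta> \<subseteq> \<Delta>"
  shows "quotient_of_smaller_sym_group S (card \<Omega>)"
proof -
  have fin: "finite \<Delta>" "finite (\<Omega> - \<Delta>)" using assms(2) finite_\<Omega> finite_subset by auto
  have "card \<Delta> > 0" using assms(1) fin(1) by (simp add: card_gt_0_iff)
  then have card: "card \<Delta> < card \<Omega>" "card (\<Omega> - \<Delta>) < card \<Omega>"
    using psubset_card_mono[OF finite_\<Omega> assms(2)] assms(2) fin by (auto simp: card_Diff_subset)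
  from quotient_of_subgroup_restrict_or_fix[OF simple_S quotient fin(1) invariant]
  show ?thesis
  proof
    assume "quotient_of_subgroup S (Perm \<Omega>) {a \<in> A. \<forall>x\<in>\<Delta>. a x = x}"
    from quotient_of_subgroup_Perm_Diff[OF simple_S finite_\<Omega> this]
    show ?thesis using quotient_of_smaller_sym_groupI[OF group_S fin(2) card(2)] by blast
  next
    assume "quotient_of_subgroup S (Perm \<Delta>) ((\<lambda>a. perm_restrict a \<Delta>) ` A)"
    then show ?thesis using quotient_of_smaller_sym_groupI[OF group_S fin(1) card(1)] by blast
  qed
qed

definition blocks :: "'b set set" where
  "blocks = group_orbit N ` \<Omega>"

lemma finite_blocks: "finite blocks"
  using finite_\<Omega> by (simp add: blocks_def)

lemma block_action_hom: "set_action blocks \<in> hom (perm_group A) (Perm blocks)"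
proof -
  have "a ` X \<in> blocks" if a: "a \<in> A" and "X \<in> blocks" for a X
  proof -
    from \<open>X \<in> blocks\<close> obtain y where "y \<in> \<Omega>" "X = group_orbit N y" by (auto simp: blocks_def)
    then show ?thesis
      using image_group_orbit[OF subgroup_A h.normal_kernel a] permutes_in_image[OF permutes_\<Omega>[OF a]]
      by (simp add: blocks_def)
  qed
  then show ?thesis
    using set_action_hom[OF finite_blocks, of A "\<lambda>a. a"] permutes_inj[OF permutes_\<Omega>] by simp
qed

text \<open>If the kernel M of the action on blocks were mapped onto S, then A = N M would fix the block
  of x, a proper nonempty subset of \<Omega>.\<close>
lemma block_action_kernel_trivial:
  assumes transitive: "\<And>\<Delta>. \<Delta> \<noteq> {} \<Longrightarrow> \<Delta> \<subset> \<Omega> \<Longrightarrow> \<exists>a\<in>A. \<not> a ` \<Delta> \<subseteq> \<Delta>"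
    and x: "x \<in> \<Omega>" and intransitive: "\<not> \<Omega> \<subseteq> group_orbit N x"
    and a: "a \<in> A" "set_action blocks a = id"
  shows "h a = \<one>\<^bsub>S\<^esub>"
proof -
  have kernel_action: "kernel (perm_group A) (Perm blocks) (set_action blocks) = {a \<in> A. set_action blocks a = id}"
    by (simp add: kernel_def)
  from simple_image_of_kernel_cases[OF h.G.is_group group_Perm simple_S hom_h _ block_action_hom] h_onto
  consider "h ` {a \<in> A. set_action blocks a = id} = carrier S"
    | "\<forall>a\<in>A. set_action blocks a = id \<longrightarrow> h a = \<one>\<^bsub>S\<^esub>"
    unfolding kernel_action by auto
  then show ?thesis
  proof cases
    case 1
    have "a' ` group_orbit N x \<subseteq> group_orbit N x" if a': "a' \<in> A" for a'
    proof -
      obtain n m where nm: "n \<in> N" "m \<in> A" "set_action blocks m = id" "a' = n \<circ> m"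
        by (rule kernel_times_onto[OF _ 1 a']) auto
      have "m ` group_orbit N x = group_orbit N x"
        using fun_cong[OF nm(3), of "group_orbit N x"] x by (simp add: set_action_def blocks_def)
      then have "a' ` group_orbit N x = n ` group_orbit N x" by (metis nm(4) image_comp)
      also have "\<dots> = group_orbit N x"
        using image_group_orbit[OF subgroup_A h.normal_kernel] group_orbit_eq[OF subgroup_N nm(1)] nm(1)
        by (simp add: kernel_def)
      finally show ?thesis by simp
    qed
    moreover have "group_orbit N x \<noteq> {}" using group_orbit_self[OF subgroup_N, of x] by blast
    moreover have "group_orbit N x \<subset> \<Omega>" using group_orbit_subset[OF subgroup_N x] intransitive by blast
    ultimately show ?thesis using transitive[of "group_orbit N x"] by blast
  next
    case 2
    then show ?thesis using a by blast
  qed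
qed

lemma card_blocks_less:
  assumes n: "n \<in> N" "n x \<noteq> x"
  shows "card blocks < card \<Omega>"
proof -
  have nA: "n \<in> A" using n(1) by (simp add: kernel_def)
  have "x \<in> \<Omega>" "n x \<in> \<Omega>"
    using n(2) permutes_not_in[OF permutes_\<Omega>[OF nA]] permutes_in_image[OF permutes_\<Omega>[OF nA]] by blast+
  then have "\<not> inj_on (group_orbit N) \<Omega>"
    using group_orbit_eq[OF subgroup_N n(1)] n(2) by (meson inj_onD)
  then show ?thesis
    using card_image_le[OF finite_\<Omega>, of "group_orbit N"] inj_on_iff_eq_card[OF finite_\<Omega>, of "group_orbit N"]
    by (simp add: blocks_def)
qed

lemma smaller_if_kernel_intransitive:
  assumes transitive: "\<And>\<Delta>. \<Delta> \<noteq> {} \<Longrightarrow> \<Delta> \<subset> \<Omega> \<Longrightarrow> \<exists>a\<in>A. \<not> a ` \<Delta> \<subseteq> \<Delta>"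
    and n: "n \<in> N" "n x \<noteq> x" and intransitive: "\<not> \<Omega> \<subseteq> group_orbit N x"
  shows "quotient_of_smaller_sym_group S (card \<Omega>)"
proof -
  have "x \<in> \<Omega>" using n permutes_not_in[OF permutes_\<Omega>] by (auto simp: kernel_def)
  have "quotient_of_subgroup S (Perm blocks) (set_action blocks ` A)"
    using block_action_hom block_action_kernel_trivial[OF transitive \<open>x \<in> \<Omega>\<close> intransitive]
    by (intro quotient_of_subgroup_image[OF group_Perm group_Perm group_S subgroup_A hom_h_Perm h_onto])
      simp_all
  then show ?thesis
    using quotient_of_smaller_sym_groupI[OF group_S finite_blocks card_blocks_less[OF n]] by blast
qed

lemma iso_unless_smaller:
  assumes not_smaller: "\<not> quotient_of_smaller_sym_group S (card \<Omega>)"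
  shows "S \<cong> perm_group A"
proof (rule iso_if_kernel_trivial, rule subsetI)
  have transitive: "\<exists>a\<in>A. \<not> a ` \<Delta> \<subseteq> \<Delta>" if "\<Delta> \<noteq> {}" "\<Delta> \<subset> \<Omega>" for \<Delta>
    using smaller_if_invariant[OF that] not_smaller by blast
  fix n assume n: "n \<in> N"
  show "n \<in> {id}"
  proof (rule ccontr)
    assume "n \<notin> {id}"
    then obtain x where nx: "n x \<noteq> x" by (auto simp: fun_eq_iff)
    have "n \<in> A" using n by (simp add: kernel_def)
    then have x: "x \<in> \<Omega>" using permutes_not_in[OF permutes_\<Omega>] nx by blast
    show False
      using smaller_if_kernel_transitive[OF x] smaller_if_kernel_intransitive[OF transitive n nx]
        not_smaller by blast
  qed
qed

end

theorem iso_to_subgroup_of_Sym_if_quotient_of_subgroup: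
  assumes "simple_group S" "quotient_of_subgroup S (sym_group m) A"
  shows "iso_to_subgroup_of_Sym S m"
  using assms(2)
proof (induction m arbitrary: A rule: less_induct)
  case (less m A)
  then obtain h where A: "subgroup A (Perm {1..m})" and h: "h \<in> hom (perm_group A) S" "h ` A = carrier S"
    unfolding quotient_of_subgroup_def sym_group_eq_Perm by auto
  interpret simple_quotient_of_perm_group "{1..m}" A S h
    using A h assms(1) by (simp add: simple_quotient_of_perm_group_def)
  show ?case
  proof (cases "quotient_of_smaller_sym_group S (card {1..m})")
    case True
    then obtain m' A' where m': "m' < m" and "quotient_of_subgroup S (sym_group m') A'"
      unfolding quotient_of_smaller_sym_group_def by auto
    then have "iso_to_subgroup_of_Sym S m'" by (rule less.IH)
    then show ?thesis by (rule iso_to_subgroup_of_Sym_mono) (use m' in simp)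
  next
    case False
    with A iso_unless_smaller show ?thesis
      unfolding iso_to_subgroup_of_Sym_def sym_group_eq_Perm Perm_carrier_update by blast
  qed
qed

lemma iso_to_subgroup_of_Sym_if_quotient_of_Perm:
  assumes S: "simple_group S" and "finite \<Omega>" "card \<Omega> \<le> n"
    and q: "quotient_of_subgroup S (Perm \<Omega>) A"
  shows "iso_to_subgroup_of_Sym S n"
proof -
  obtain A' where "quotient_of_subgroup S (sym_group (card \<Omega>)) A'"
    using quotient_of_subgroup_sym_group_card[OF simple_group.axioms(1)[OF S] assms(2) q] .
  then have "iso_to_subgroup_of_Sym S (card \<Omega>)"
    by (rule iso_to_subgroup_of_Sym_if_quotient_of_subgroup[OF S])
  then show ?thesis by (rule iso_to_subgroup_of_Sym_mono) (rule assms(3))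
qed

section \<open>Automorphisms of graphs of maximum degree two\<close>

definition graph_aut :: "'a set set \<Rightarrow> 'a set \<Rightarrow> ('a \<Rightarrow> 'a) \<Rightarrow> bool" where
  "graph_aut E W b \<longleftrightarrow> b permutes W \<and> (\<forall>x\<in>W. \<forall>y\<in>W. {b x, b y} \<in> E \<longleftrightarrow> {x, y} \<in> E)"

definition adjacent :: "'a set set \<Rightarrow> 'a set \<Rightarrow> ('a \<times> 'a) set" where
  "adjacent E W = {(x, y). x \<in> W \<and> y \<in> W \<and> {x, y} \<in> E}"

lemma conn_rel_adjacent: "conn_rel E W = {(u, v). u \<in> W \<and> v \<in> W \<and> (u, v) \<in> (adjacent E W)\<^sup>*}"
  by (simp add: conn_rel_def adjacent_def)

lemma sym_adjacent: "sym (adjacent E W)"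
  by (auto simp: sym_def adjacent_def insert_commute)

lemma graph_aut_inv:
  assumes "graph_aut E W b"
  shows "graph_aut E W (inv' b)"
proof -
  have b: "b permutes W" and edges: "\<And>x y. x \<in> W \<Longrightarrow> y \<in> W \<Longrightarrow> {b x, b y} \<in> E \<longleftrightarrow> {x, y} \<in> E"
    using assms by (auto simp: graph_aut_def)
  have "{inv' b x, inv' b y} \<in> E \<longleftrightarrow> {x, y} \<in> E" if "x \<in> W" "y \<in> W" for x y
    using edges[of "inv' b x" "inv' b y"] that permutes_in_image[OF permutes_inv[OF b]]
      permutes_inverses(1)[OF b] by simp
  then show ?thesis using permutes_inv[OF b] by (simp add: graph_aut_def)
qed

lemma graph_aut_adjacent_rtrancl:
  assumes "graph_aut E W b" "(x, y) \<in> (adjacent E W)\<^sup>*"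
  shows "(b x, b y) \<in> (adjacent E W)\<^sup>*"
  using assms(2)
proof (induction rule: rtrancl_induct)
  case (step y z)
  have b_perm: "b permutes W" using assms(1) by (simp add: graph_aut_def)
  from step.hyps(2) have "(b y, b z) \<in> adjacent E W"
    using assms(1) permutes_in_image[OF b_perm] by (auto simp: adjacent_def graph_aut_def)
  then show ?case using step.IH by simp
qed simp

lemma graph_aut_image_component:
  assumes b: "graph_aut E W b" and X: "X \<in> components E W"
  shows "b ` X \<in> components E W"
proof -
  obtain x where x: "x \<in> W" "X = conn_rel E W `` {x}"
    using X unfolding components_def by (rule quotientE) auto
  have b_perm: "b permutes W" using b by (simp add: graph_aut_def)
  have "b ` X = conn_rel E W `` {b x}"
  proof
    show "b ` X \<subseteq> conn_rel E W `` {b x}"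
      using x graph_aut_adjacent_rtrancl[OF b] permutes_in_image[OF b_perm]
      by (auto simp: conn_rel_adjacent)
    show "conn_rel E W `` {b x} \<subseteq> b ` X"
    proof
      fix z assume "z \<in> conn_rel E W `` {b x}"
      then have z: "z \<in> W" "(b x, z) \<in> (adjacent E W)\<^sup>*" by (simp_all add: conn_rel_adjacent)
      have "(x, inv' b z) \<in> (adjacent E W)\<^sup>*"
        using graph_aut_adjacent_rtrancl[OF graph_aut_inv[OF b] z(2)] permutes_inverses(2)[OF b_perm]
        by simp
      then have "inv' b z \<in> X"
        using x z(1) permutes_in_image[OF permutes_inv[OF b_perm]] by (simp add: conn_rel_adjacent)
      then show "z \<in> b ` X" using permutes_inverses(1)[OF b_perm] by (metis image_eqI)
    qed
  qed
  then show ?thesis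
    using x permutes_in_image[OF b_perm] unfolding components_def by (simp add: quotientI)
qed

lemma graph_aut_perm_restrict:
  assumes "graph_aut E W b" "\<Delta> \<subseteq> W" "finite \<Delta>" "b ` \<Delta> \<subseteq> \<Delta>"
  shows "graph_aut E \<Delta> (perm_restrict b \<Delta>)"
  using assms perm_restrict_permutes[of b W \<Delta>]
  by (auto simp: graph_aut_def perm_restrict_simps subset_iff)

lemma permutation_in_orbit_step_iff:
  assumes "permutation f"
  shows "f e \<in> orbit f c \<longleftrightarrow> e \<in> orbit f c"
proof
  assume "f e \<in> orbit f c"
  then have "orbit f e = orbit f c"
    using orbit_cyclic_eq3[OF cyclic_on_orbit'[OF assms]] permutation_orbit_step[OF assms] by metis
  then show "e \<in> orbit f c" using permutation_self_in_orbit[OF assms] by blast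
qed (rule orbit.step)

lemma permutations_of_doubleton_commute:
  assumes "p permutes {u, w}" "q permutes {u, w}"
  shows "p \<circ> q = q \<circ> p"
  using assms by (auto simp: permutes_doubleton_iff)

locale max_degree_two_component =
  fixes E :: "'a set set" and W :: "'a set" and v\<^sub>0 :: 'a
  assumes finite_W: "finite W"
    and max_degree: "\<And>v. v \<in> W \<Longrightarrow> card (nbhd W E v) \<le> 2"
    and v\<^sub>0_in_W: "v\<^sub>0 \<in> W"
begin

definition D :: "'a set" where
  "D = conn_rel E W `` {v\<^sub>0}"

lemma D_subset: "D \<subseteq> W"
  by (auto simp: D_def conn_rel_def)

lemma v\<^sub>0_in_D: "v\<^sub>0 \<in> D"
  using v\<^sub>0_in_W by (simp add: D_def conn_rel_def)

lemma finite_D: "finite D"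
  using D_subset finite_W finite_subset by blast

lemma nbhd_subset: "nbhd W E x \<subseteq> W"
  by (auto simp: nbhd_def)

lemma nbhd_sym: "x \<in> W \<Longrightarrow> y \<in> nbhd W E x \<Longrightarrow> x \<in> nbhd W E y"
  by (simp add: nbhd_def insert_commute)

lemma D_closed:
  assumes "x \<in> D" "y \<in> nbhd W E x"
  shows "y \<in> D"
proof -
  have "(v\<^sub>0, x) \<in> (adjacent E W)\<^sup>*" "(x, y) \<in> adjacent E W"
    using assms by (auto simp: D_def conn_rel_adjacent adjacent_def nbhd_def insert_commute)
  then show ?thesis using assms(2) v\<^sub>0_in_W by (auto simp: D_def conn_rel_adjacent nbhd_def)
qed

lemma D_induct:
  assumes "x\<^sub>0 \<in> D" "z \<in> D" and "P x\<^sub>0"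
    and step: "\<And>x y. x \<in> D \<Longrightarrow> P x \<Longrightarrow> y \<in> nbhd W E x \<Longrightarrow> P y"
  shows "P z"
proof -
  have "(v\<^sub>0, x\<^sub>0) \<in> (adjacent E W)\<^sup>*" "(v\<^sub>0, z) \<in> (adjacent E W)\<^sup>*"
    using assms(1,2) by (simp_all add: D_def conn_rel_adjacent)
  then have "(x\<^sub>0, z) \<in> (adjacent E W)\<^sup>*"
    using symD[OF sym_rtrancl[OF sym_adjacent]] by (meson rtrancl_trans)
  then have "z \<in> D \<and> P z"
  proof (induction rule: rtrancl_induct)
    case (step x y)
    from step.hyps(2) have "y \<in> nbhd W E x" by (simp add: adjacent_def nbhd_def insert_commute)
    then show ?case using step.IH D_closed assms(4) by blast
  qed (use assms(1,3) in simp)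
  then show ?thesis ..
qed

lemma nbhd_other_unique:
  assumes "y \<in> W" "x \<in> nbhd W E y" "z \<in> nbhd W E y" "z' \<in> nbhd W E y" "z \<noteq> x" "z' \<noteq> x"
  shows "z = z'"
proof (rule ccontr)
  assume "z \<noteq> z'"
  then have "card {x, z, z'} = 3" using assms(5,6) by simp
  moreover have "card {x, z, z'} \<le> card (nbhd W E y)"
    using assms(2-4) finite_subset[OF nbhd_subset finite_W] by (intro card_mono) auto
  ultimately show False using max_degree[OF assms(1)] by simp
qed

definition arcs :: "('a \<times> 'a) set" where
  "arcs = {(x, y). x \<in> D \<and> y \<in> nbhd W E x}"

text \<open>Walking along the path or cycle: the arc (x, y) is followed by (y, z) for the other neighbour z
  of y, and at an end vertex of a path the walk turns back.\<close>
definition next_arc :: "'a \<times> 'a \<Rightarrow> 'a \<times> 'a" where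
  "next_arc a = (if a \<in> arcs then
     (snd a, if \<exists>z\<in>nbhd W E (snd a). z \<noteq> fst a then SOME z. z \<in> nbhd W E (snd a) \<and> z \<noteq> fst a
             else fst a)
   else a)"

lemma arcs_iff: "(x, y) \<in> arcs \<longleftrightarrow> x \<in> D \<and> y \<in> nbhd W E x"
  by (simp add: arcs_def)

lemma arc_target:
  assumes "(x, y) \<in> arcs"
  shows "y \<in> D" "y \<in> W" "x \<in> nbhd W E y"
proof -
  have x: "x \<in> D" "y \<in> nbhd W E x" using assms by (simp_all add: arcs_iff)
  show "y \<in> D" using D_closed[OF x] .
  then show "y \<in> W" using D_subset by (rule subsetD[rotated])
  show "x \<in> nbhd W E y" by (rule nbhd_sym[OF subsetD[OF D_subset x(1)] x(2)])
qed

lemma swap_arc: "(x, y) \<in> arcs \<Longrightarrow> (y, x) \<in> arcs"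
  unfolding arcs_iff[of y] using arc_target(1,3) by blast

lemma next_arc_forward:
  assumes "(x, y) \<in> arcs" "z \<in> nbhd W E y" "z \<noteq> x"
  shows "next_arc (x, y) = (y, z)"
proof -
  have "(SOME z. z \<in> nbhd W E y \<and> z \<noteq> x) = z"
    using someI[of "\<lambda>z. z \<in> nbhd W E y \<and> z \<noteq> x" z] assms nbhd_other_unique arc_target[OF assms(1)]
    by blast
  then show ?thesis using assms by (auto simp: next_arc_def)
qed

lemma next_arc_back:
  assumes "(x, y) \<in> arcs" "\<And>z. z \<in> nbhd W E y \<Longrightarrow> z = x"
  shows "next_arc (x, y) = (y, x)"
  using assms by (auto simp: next_arc_def)

lemma next_arc_cases:
  assumes "(x, y) \<in> arcs"
  obtains z where "z \<in> nbhd W E y" "z \<noteq> x" "next_arc (x, y) = (y, z)"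
    | "\<And>z. z \<in> nbhd W E y \<Longrightarrow> z = x" "next_arc (x, y) = (y, x)"
  using next_arc_forward[OF assms] next_arc_back[OF assms] by blast

lemma next_arc_in_arcs:
  assumes "a \<in> arcs"
  shows "next_arc a \<in> arcs"
proof -
  obtain x y where a: "a = (x, y)" by (cases a)
  with assms have xy: "(x, y) \<in> arcs" by simp
  then have "next_arc (x, y) \<in> arcs"
  proof (cases rule: next_arc_cases)
    case (1 z)
    then show ?thesis using arc_target(1)[OF xy] by (simp add: arcs_iff)
  next
    case 2
    then show ?thesis using swap_arc[OF xy] by simp
  qed
  then show ?thesis using a by simp
qed

lemma next_arc_swap_next_arc:
  assumes "a \<in> arcs"
  shows "next_arc (prod.swap (next_arc a)) = prod.swap a"
proof -
  obtain x y where a: "a = (x, y)" by (cases a)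
  with assms have xy: "(x, y) \<in> arcs" by simp
  then have "next_arc (prod.swap (next_arc (x, y))) = (y, x)"
  proof (cases rule: next_arc_cases)
    case (1 z)
    have "(y, z) \<in> arcs" using arc_target(1)[OF xy] 1(1) by (simp add: arcs_iff)
    then have "(z, y) \<in> arcs" by (rule swap_arc)
    then have "next_arc (z, y) = (y, x)" using next_arc_forward arc_target(3)[OF xy] 1(2) by simp
    then show ?thesis using 1(3) by simp
  next
    case 2
    then show ?thesis using next_arc_back[OF xy] by simp
  qed
  then show ?thesis using a by simp
qed

lemma finite_arcs: "finite arcs"
  using finite_subset[of arcs "D \<times> W"] finite_D finite_W nbhd_subset by (auto simp: arcs_def)

lemma next_arc_permutes: "next_arc permutes arcs"
proof (rule inj_imp_permutes[OF _ finite_arcs])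
  show "inj_on next_arc arcs"
    by (rule inj_on_inverseI[of _ "\<lambda>a. prod.swap (next_arc (prod.swap a))"])
      (use next_arc_swap_next_arc in \<open>simp add: swap_swap\<close>)
  show "next_arc a \<in> arcs" if "a \<in> arcs" for a using that by (rule next_arc_in_arcs)
  show "next_arc a = a" if "a \<notin> arcs" for a using that by (simp add: next_arc_def)
qed

lemma graph_aut_nbhd:
  assumes b: "graph_aut E D b" and x: "x \<in> D"
  shows "b ` nbhd W E x = nbhd W E (b x)"
proof -
  have b_perm: "b permutes D" and edges: "\<And>u v. u \<in> D \<Longrightarrow> v \<in> D \<Longrightarrow> {b u, b v} \<in> E \<longleftrightarrow> {u, v} \<in> E"
    using b by (auto simp: graph_aut_def)
  have bx: "b x \<in> D" using x permutes_in_image[OF b_perm] by simp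
  have iff: "b u \<in> nbhd W E (b x) \<longleftrightarrow> u \<in> nbhd W E x" if "u \<in> D" for u
    using that edges[OF that x] permutes_in_image[OF b_perm] subsetD[OF D_subset] by (auto simp: nbhd_def)
  have nbhd_D: "nbhd W E x \<subseteq> D" "nbhd W E (b x) \<subseteq> D"
    using D_closed x bx by blast+
  show ?thesis
  proof (intro equalityI subsetI)
    fix w assume "w \<in> b ` nbhd W E x"
    then obtain u where "u \<in> nbhd W E x" "w = b u" by blast
    then show "w \<in> nbhd W E (b x)" using iff[of u] nbhd_D(1) by blast
  next
    fix w assume w: "w \<in> nbhd W E (b x)"
    then have "w \<in> b ` D" using subsetD[OF nbhd_D(2) w] permutes_image[OF b_perm] by simp
    then obtain u where "u \<in> D" "w = b u" by blast
    then show "w \<in> b ` nbhd W E x" using iff[of u] w by blast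
  qed
qed

lemma graph_aut_arcs:
  assumes "graph_aut E D b"
  shows "map_prod b b a \<in> arcs \<longleftrightarrow> a \<in> arcs"
proof (cases a)
  case (Pair x y)
  have b_perm: "b permutes D" using assms by (simp add: graph_aut_def)
  show ?thesis
  proof (cases "x \<in> D")
    case True
    then have "b y \<in> nbhd W E (b x) \<longleftrightarrow> y \<in> nbhd W E x"
      using graph_aut_nbhd[OF assms True] permutes_inj[OF b_perm] by (metis inj_image_mem_iff)
    then show ?thesis using Pair True permutes_in_image[OF b_perm] by (simp add: arcs_iff)
  next
    case False
    then show ?thesis using Pair permutes_in_image[OF b_perm] by (simp add: arcs_iff)
  qed
qed

lemma graph_aut_next_arc:
  assumes b: "graph_aut E D b"
  shows "next_arc (map_prod b b a) = map_prod b b (next_arc a)"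
proof (cases "a \<in> arcs")
  case True
  obtain x y where a: "a = (x, y)" by (cases a)
  with True have xy: "(x, y) \<in> arcs" by simp
  have b_inj: "inj b" using b permutes_inj by (auto simp: graph_aut_def)
  have bxy: "(b x, b y) \<in> arcs" using graph_aut_arcs[OF b, of a] True a by simp
  have nbhd_by: "nbhd W E (b y) = b ` nbhd W E y" using graph_aut_nbhd[OF b arc_target(1)[OF xy]] by simp
  from xy have "next_arc (b x, b y) = map_prod b b (next_arc (x, y))"
  proof (cases rule: next_arc_cases)
    case (1 z)
    then have "next_arc (b x, b y) = (b y, b z)"
      using next_arc_forward[OF bxy] nbhd_by injD[OF b_inj] by blast
    then show ?thesis using 1(3) by simp
  next
    case 2
    then have "next_arc (b x, b y) = (b y, b x)" using next_arc_back[OF bxy] nbhd_by by auto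
    then show ?thesis using 2(2) by simp
  qed
  then show ?thesis using a by simp
next
  case False
  then show ?thesis using graph_aut_arcs[OF b, of a] by (simp add: next_arc_def)
qed

lemma graph_aut_next_arc_funpow:
  "graph_aut E D b \<Longrightarrow> (next_arc ^^ n) (map_prod b b a) = map_prod b b ((next_arc ^^ n) a)"
  by (induction n) (simp_all add: graph_aut_next_arc)

lemma permutation_next_arc: "permutation next_arc"
  using next_arc_permutes finite_arcs by (auto simp: permutation_permutes)

lemma graph_aut_image_orbit:
  assumes "graph_aut E D b"
  shows "map_prod b b ` orbit next_arc a = orbit next_arc (map_prod b b a)"
proof -
  have "orbit next_arc c = range (\<lambda>n. (next_arc ^^ n) c)" for c
    by (auto simp: orbit_altdef_permutation[OF permutation_next_arc])
  then show ?thesis using graph_aut_next_arc_funpow[OF assms] by (simp add: image_image)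
qed

lemma graph_aut_eq_if_eq_on_arc:
  assumes b: "graph_aut E D b" and b': "graph_aut E D b'" and xy: "(x, y) \<in> arcs"
    and eq_x: "b x = b' x" and eq_y: "b y = b' y"
  shows "b = b'"
proof -
  have perm: "b permutes D" "b' permutes D" using b b' unfolding graph_aut_def by blast+
  have propagate: "\<forall>w\<in>nbhd W E u. b w = b' w"
    if u: "u \<in> D" "b u = b' u" and w0: "w0 \<in> nbhd W E u" "b w0 = b' w0" for u w0
  proof
    fix w assume w: "w \<in> nbhd W E u"
    show "b w = b' w"
    proof (cases "w = w0")
      case False
      have nbhd_bu: "b ` nbhd W E u = nbhd W E (b u)" "b' ` nbhd W E u = nbhd W E (b u)"
        using graph_aut_nbhd[OF b u(1)] graph_aut_nbhd[OF b' u(1)] u(2) by simp_all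
      have "b u \<in> W" using u(1) permutes_in_image[OF perm(1)] subsetD[OF D_subset] by simp
      moreover have "b w0 \<in> nbhd W E (b u)" "b w \<in> nbhd W E (b u)" "b' w \<in> nbhd W E (b u)"
        using nbhd_bu w w0(1) by (metis imageI)+
      moreover have "b w \<noteq> b w0" "b' w \<noteq> b w0"
        using False w0(2) injD[OF permutes_inj[OF perm(1)]] injD[OF permutes_inj[OF perm(2)]] by metis+
      ultimately show ?thesis by (rule nbhd_other_unique)
    qed (use w0 in simp)
  qed
  define Q where "Q u \<longleftrightarrow> b u = b' u \<and> (\<forall>w\<in>nbhd W E u. b w = b' w)" for u
  have xD: "x \<in> D" and y: "y \<in> nbhd W E x" using xy by (simp_all add: arcs_iff)
  have Q: "Q z" if "z \<in> D" for z
  proof (rule D_induct[OF xD that, of Q])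
    show "Q x" using propagate[OF xD eq_x y eq_y] eq_x by (simp add: Q_def)
    fix u w assume u: "u \<in> D" "Q u" and w: "w \<in> nbhd W E u"
    then have "w \<in> D" "b w = b' w" "u \<in> nbhd W E w"
      using D_closed nbhd_sym D_subset by (auto simp: Q_def)
    then show "Q w" using propagate u(2) by (simp add: Q_def)
  qed
  show "b = b'"
  proof
    fix z
    show "b z = b' z"
      using Q[of z] permutes_not_in[OF perm(1)] permutes_not_in[OF perm(2)]
      by (cases "z \<in> D") (auto simp: Q_def)
  qed
qed

lemma arcs_subset_two_orbits:
  assumes u\<^sub>0: "u\<^sub>0 \<in> nbhd W E v\<^sub>0"
  shows "arcs \<subseteq> orbit next_arc (v\<^sub>0, u\<^sub>0) \<union> orbit next_arc (u\<^sub>0, v\<^sub>0)"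
proof -
  define U where "U = orbit next_arc (v\<^sub>0, u\<^sub>0) \<union> orbit next_arc (u\<^sub>0, v\<^sub>0)"
  have U_step: "next_arc e \<in> U \<longleftrightarrow> e \<in> U" for e
    using permutation_in_orbit_step_iff[OF permutation_next_arc] by (simp add: U_def)
  define Q where "Q x \<longleftrightarrow> (\<forall>y\<in>nbhd W E x. (x, y) \<in> U \<and> (y, x) \<in> U)" for x
  have Q_target: "Q y" if xy: "(x, y) \<in> arcs" "(x, y) \<in> U" "(y, x) \<in> U" for x y
    unfolding Q_def
  proof
    fix z assume z: "z \<in> nbhd W E y"
    show "(y, z) \<in> U \<and> (z, y) \<in> U"
    proof (cases "z = x")
      case False
      have "(y, z) \<in> arcs" using arc_target(1)[OF xy(1)] z by (simp add: arcs_iff)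
      then have "next_arc (z, y) = (y, x)"
        using next_arc_forward[OF swap_arc arc_target(3)[OF xy(1)]] False by simp
      moreover have "next_arc (x, y) = (y, z)" by (rule next_arc_forward[OF xy(1) z False])
      ultimately show ?thesis using U_step xy(2,3) by metis
    qed (use xy in simp)
  qed
  have a\<^sub>0: "(v\<^sub>0, u\<^sub>0) \<in> arcs" using v\<^sub>0_in_D u\<^sub>0 by (simp add: arcs_iff)
  have U\<^sub>0: "(v\<^sub>0, u\<^sub>0) \<in> U" "(u\<^sub>0, v\<^sub>0) \<in> U"
    using permutation_self_in_orbit[OF permutation_next_arc] by (auto simp: U_def)
  have "Q x" if "x \<in> D" for x
  proof (rule D_induct[OF arc_target(1)[OF a\<^sub>0] that, of Q])
    show "Q u\<^sub>0" by (rule Q_target[OF a\<^sub>0 U\<^sub>0])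
    fix x y assume "x \<in> D" "Q x" "y \<in> nbhd W E x"
    then have "(x, y) \<in> arcs" "(x, y) \<in> U" "(y, x) \<in> U" by (simp_all add: Q_def arcs_iff)
    then show "Q y" by (rule Q_target)
  qed
  then show ?thesis unfolding U_def[symmetric] by (auto simp: arcs_def Q_def)
qed

lemma graph_auts_commute_if_rotating:
  assumes b: "graph_aut E D b" "graph_aut E D b'" "graph_aut E D (b \<circ> b')" "graph_aut E D (b' \<circ> b)"
    and a: "a \<in> arcs" and rot: "map_prod b b a \<in> orbit next_arc a" "map_prod b' b' a \<in> orbit next_arc a"
  shows "b \<circ> b' = b' \<circ> b"
proof -
  obtain i j where i: "map_prod b b a = (next_arc ^^ i) a" and j: "map_prod b' b' a = (next_arc ^^ j) a"
    using rot by (auto simp: orbit_altdef_permutation[OF permutation_next_arc])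
  have "map_prod (b \<circ> b') (b \<circ> b') a = (next_arc ^^ (j + i)) a"
    using graph_aut_next_arc_funpow[OF b(1), of j a] i j by (simp add: funpow_add map_prod.comp[symmetric])
  moreover have "map_prod (b' \<circ> b) (b' \<circ> b) a = (next_arc ^^ (i + j)) a"
    using graph_aut_next_arc_funpow[OF b(2), of i a] i j by (simp add: funpow_add map_prod.comp[symmetric])
  ultimately have "map_prod (b \<circ> b') (b \<circ> b') a = map_prod (b' \<circ> b) (b' \<circ> b) a"
    by (simp add: add.commute)
  then show ?thesis
    using graph_aut_eq_if_eq_on_arc[OF b(3,4)] a by (cases a) auto
qed

text \<open>On a path all arcs form a single orbit of next_arc, on a cycle there is one orbit per direction.\<close>
definition orientations :: "('a \<times> 'a) set set" where
  "orientations = orbit next_arc ` arcs"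

lemma orientations_subset:
  assumes "u\<^sub>0 \<in> nbhd W E v\<^sub>0"
  shows "orientations \<subseteq> {orbit next_arc (v\<^sub>0, u\<^sub>0), orbit next_arc (u\<^sub>0, v\<^sub>0)}"
  using arcs_subset_two_orbits[OF assms] orbit_cyclic_eq3[OF cyclic_on_orbit'[OF permutation_next_arc]]
  by (auto simp: orientations_def)

lemma orientation_action_hom:
  assumes B: "subgroup B (Perm D)" and aut: "\<And>b. b \<in> B \<Longrightarrow> graph_aut E D b"
  shows "(\<lambda>b. set_action orientations (map_prod b b)) \<in> hom (perm_group B) (Perm orientations)"
proof (rule set_action_hom)
  show "finite orientations" using finite_arcs by (simp add: orientations_def)
  show "inj (map_prod b b)" if "b \<in> B" for b
    using permutes_inj[OF subgroup_Perm_permutes[OF B that]] by (simp add: prod.inj_map)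
  show "map_prod b b ` X \<in> orientations" if b: "b \<in> B" and X: "X \<in> orientations" for b X
  proof -
    obtain a where "a \<in> arcs" "X = orbit next_arc a" using X by (auto simp: orientations_def)
    then show ?thesis
      using graph_aut_image_orbit[OF aut[OF b]] graph_aut_arcs[OF aut[OF b]] by (simp add: orientations_def)
  qed
  show "map_prod (b \<circ> b') (b \<circ> b') = map_prod b b \<circ> map_prod b' b'" for b b'
    by (simp add: map_prod.comp)
qed

lemma rotating_if_fixes_orientations:
  assumes "a \<in> arcs" "set_action orientations (map_prod b b) = id"
  shows "map_prod b b a \<in> orbit next_arc a"
proof -
  have "map_prod b b ` orbit next_arc a = orbit next_arc a"
    using fun_cong[OF assms(2), of "orbit next_arc a"] assms(1) by (simp add: set_action_def orientations_def)
  then show ?thesis using permutation_self_in_orbit[OF permutation_next_arc] by blast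
qed

lemma permutations_of_orientations_commute:
  assumes "u\<^sub>0 \<in> nbhd W E v\<^sub>0" "p permutes orientations" "q permutes orientations"
  shows "p \<circ> q = q \<circ> p"
  using assms(2,3) orientations_subset[OF assms(1)] permutes_subset permutations_of_doubleton_commute
  by meson

lemma D_eq_singleton_if_isolated:
  assumes "nbhd W E v\<^sub>0 = {}"
  shows "D = {v\<^sub>0}"
proof -
  have "z = v\<^sub>0" if "z \<in> D" for z
    by (rule D_induct[OF v\<^sub>0_in_D that]) (use assms in auto)
  then show ?thesis using v\<^sub>0_in_D by blast
qed

theorem comm_group_if_quotient_of_graph_auts:
  assumes S: "simple_group S" and q: "quotient_of_subgroup S (Perm D) B"
    and aut: "\<And>b. b \<in> B \<Longrightarrow> graph_aut E D b"
  shows "comm_group S"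
proof (cases "nbhd W E v\<^sub>0 = {}")
  case True
  then have "B \<subseteq> {id}"
    using aut D_eq_singleton_if_isolated by (auto simp: graph_aut_def)
  then show ?thesis using simple_group_not_quotient_of_trivial[OF S q] by blast
next
  case False
  then obtain u\<^sub>0 where u\<^sub>0: "u\<^sub>0 \<in> nbhd W E v\<^sub>0" by blast
  have S_group: "group S" using simple_group.axioms(1)[OF S] .
  have B: "subgroup B (Perm D)" using q unfolding quotient_of_subgroup_def by blast
  let ?act = "\<lambda>b. set_action orientations (map_prod b b)"
  have act: "?act \<in> hom ((Perm D)\<lparr>carrier := B\<rparr>) (Perm orientations)"
    using orientation_action_hom[OF B aut] by simp
  from quotient_of_subgroup_kernel_or_image[OF group_Perm group_Perm S q act]
  consider (kernel) "quotient_of_subgroup S (Perm D) {b \<in> B. ?act b = id}"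
    | (image) "quotient_of_subgroup S (Perm orientations) (?act ` B)"
    by auto
  then show ?thesis
  proof cases
    case kernel
    have a\<^sub>0: "(v\<^sub>0, u\<^sub>0) \<in> arcs" using v\<^sub>0_in_D u\<^sub>0 by (simp add: arcs_iff)
    show ?thesis
    proof (rule comm_group_quotient_of_subgroup[OF group_Perm S_group kernel])
      fix b b' assume "b \<in> {b \<in> B. ?act b = id}" "b' \<in> {b \<in> B. ?act b = id}"
      then show "b \<otimes>\<^bsub>Perm D\<^esub> b' = b' \<otimes>\<^bsub>Perm D\<^esub> b"
        using graph_auts_commute_if_rotating[OF aut aut aut aut a\<^sub>0] subgroup_Perm_comp[OF B]
          rotating_if_fixes_orientations[OF a\<^sub>0]
        by simp
    qed
  next
    case image
    show ?thesis
    proof (rule comm_group_quotient_of_subgroup[OF group_Perm S_group image])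
      fix p q assume "p \<in> ?act ` B" "q \<in> ?act ` B"
      then have "p permutes orientations" "q permutes orientations" using act unfolding hom_def by auto
      then show "p \<otimes>\<^bsub>Perm orientations\<^esub> q = q \<otimes>\<^bsub>Perm orientations\<^esub> p"
        using permutations_of_orientations_commute[OF u\<^sub>0] by simp
    qed
  qed
qed

end

lemma comm_group_if_quotient_of_component_preserving_auts:
  assumes fin: "finite W" and deg: "\<And>v. v \<in> W \<Longrightarrow> card (nbhd W E v) \<le> 2"
    and S: "simple_group S" and q: "quotient_of_subgroup S (Perm W) B"
    and aut: "\<And>b. b \<in> B \<Longrightarrow> graph_aut E W b \<and> (\<forall>X\<in>components E W. b ` X \<subseteq> X)"
  shows "comm_group S"
proof (rule quotient_of_subgroup_Perm_induct[OF S fin q,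
      where P = "\<lambda>B. \<forall>b\<in>B. graph_aut E W b \<and> (\<forall>X\<in>components E W. b ` X \<subseteq> X)"])
  show "\<forall>b\<in>B. graph_aut E W b \<and> (\<forall>X\<in>components E W. b ` X \<subseteq> X)" using aut by blast
next
  fix A assume "quotient_of_subgroup S (Perm W) A"
    and auts: "\<forall>a\<in>A. graph_aut E W a \<and> (\<forall>X\<in>components E W. a ` X \<subseteq> X)"
    and "moved_points A \<noteq> {}"
  then obtain x where x: "x \<in> moved_points A" by blast
  have "x \<in> W"
    using x moved_points_subset[of A W] auts by (auto simp: graph_aut_def)
  then interpret max_degree_two_component E W x
    using fin deg by unfold_locales
  have "D \<in> components E W" using \<open>x \<in> W\<close> by (simp add: D_def components_def quotientI)
  then have invariant: "\<forall>a\<in>A. a ` D \<subseteq> D" using auts by blast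
  have "quotient_of_subgroup S (Perm D) ((\<lambda>a. perm_restrict a D) ` A) \<longrightarrow> comm_group S"
  proof
    assume "quotient_of_subgroup S (Perm D) ((\<lambda>a. perm_restrict a D) ` A)"
    then show "comm_group S"
    proof (rule comm_group_if_quotient_of_graph_auts[OF S])
      fix b assume "b \<in> (\<lambda>a. perm_restrict a D) ` A"
      then show "graph_aut E D b"
        using graph_aut_perm_restrict[OF _ D_subset finite_D] auts invariant by blast
    qed
  qed
  then show "\<exists>\<Delta>\<subseteq>W. \<Delta> \<inter> moved_points A \<noteq> {} \<and> (\<forall>a\<in>A. a ` \<Delta> \<subseteq> \<Delta>) \<and>
      (quotient_of_subgroup S (Perm \<Delta>) ((\<lambda>a. perm_restrict a \<Delta>) ` A) \<longrightarrow> comm_group S)"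
    using D_subset v\<^sub>0_in_D x invariant by blast
qed blast

lemma iso_to_subgroup_of_Sym_if_quotient_of_graph_auts:
  assumes fin: "finite W" and few: "few_paths_cycles t E W"
    and S: "simple_group S" and nonabelian: "\<not> comm_group S"
    and q: "quotient_of_subgroup S (Perm W) B" and aut: "\<And>b. b \<in> B \<Longrightarrow> graph_aut E W b"
  shows "iso_to_subgroup_of_Sym S t"
proof -
  define P where "P = components E W"
  have card: "card P \<le> t" and deg: "\<And>v. v \<in> W \<Longrightarrow> card (nbhd W E v) \<le> 2"
    using few by (auto simp: few_paths_cycles_def P_def nbhd_def)
  have "finite P"
    unfolding P_def components_def by (rule finite_quotient[OF fin]) (auto simp: conn_rel_def)
  have B: "subgroup B (Perm W)" using q unfolding quotient_of_subgroup_def by blast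
  have "set_action P \<in> hom (perm_group B) (Perm P)"
    using set_action_hom[OF \<open>finite P\<close>, of B "\<lambda>b. b"] permutes_inj[OF subgroup_Perm_permutes[OF B]]
      graph_aut_image_component[OF aut] by (simp add: P_def)
  then have act: "set_action P \<in> hom ((Perm W)\<lparr>carrier := B\<rparr>) (Perm P)" by simp
  from quotient_of_subgroup_kernel_or_image[OF group_Perm group_Perm S q act]
  show ?thesis
  proof
    assume kernel: "quotient_of_subgroup S (Perm W) {b \<in> B. set_action P b = \<one>\<^bsub>Perm P\<^esub>}"
    have "graph_aut E W b \<and> (\<forall>X\<in>components E W. b ` X \<subseteq> X)"
      if b: "b \<in> {b \<in> B. set_action P b = \<one>\<^bsub>Perm P\<^esub>}" for b
    proof -
      have "b ` X \<subseteq> X" if "X \<in> components E W" for X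
      proof -
        have "set_action P b X = X" using b by simp
        then show ?thesis using that by (simp add: set_action_def P_def)
      qed
      then show ?thesis using aut b by blast
    qed
    then have "comm_group S"
      using comm_group_if_quotient_of_component_preserving_auts[OF fin _ S kernel] deg by blast
    with nonabelian show ?thesis by contradiction
  next
    assume "quotient_of_subgroup S (Perm P) (set_action P ` B)"
    then show ?thesis by (rule iso_to_subgroup_of_Sym_if_quotient_of_Perm[OF S \<open>finite P\<close> card])
  qed
qed

section \<open>Circle-bounded coloured graphs\<close>

lemma graph_aut_if_automorphism: "a \<in> automorphisms V E c \<Longrightarrow> graph_aut E V a"
  by (simp add: automorphisms_def graph_aut_def)

lemma automorphism_image_GiX:
  assumes a: "a \<in> automorphisms V E c" and fixed: "\<And>y. y \<in> color_below V c i \<Longrightarrow> a y = y"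
  shows "a ` GiX V E c i X \<subseteq> GiX V E c i X"
proof
  have a_perm: "a permutes V" and edges: "\<And>u v. u \<in> V \<Longrightarrow> v \<in> V \<Longrightarrow> {a u, a v} \<in> E \<longleftrightarrow> {u, v} \<in> E"
    and colour: "\<And>v. v \<in> V \<Longrightarrow> c (a v) = c v"
    using a by (auto simp: automorphisms_def)
  fix z assume "z \<in> a ` GiX V E c i X"
  then obtain y where y: "y \<in> GiX V E c i X" "z = a y" by blast
  then have yV: "y \<in> V" and "c y = i" and yX: "nbhd V E y \<inter> color_below V c i = X"
    by (auto simp: GiX_def color_class_def)
  have "w \<in> nbhd V E (a y) \<longleftrightarrow> w \<in> nbhd V E y" if "w \<in> color_below V c i" for w
    using that fixed[OF that] edges[of w y] yV by (auto simp: nbhd_def color_below_def)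
  then have "nbhd V E (a y) \<inter> color_below V c i = X" using yX by blast
  then show "z \<in> GiX V E c i X"
    using y(2) yV \<open>c y = i\<close> colour[OF yV] permutes_in_image[OF a_perm]
    by (simp add: GiX_def color_class_def)
qed

lemma moved_point_of_least_colour:
  fixes c :: "'a \<Rightarrow> 'c::linorder"
  assumes "finite (moved_points A)" "moved_points A \<noteq> {}"
  obtains x where "x \<in> moved_points A" "\<And>a y. a \<in> A \<Longrightarrow> c y < c x \<Longrightarrow> a y = y"
proof -
  have "Min (c ` moved_points A) \<in> c ` moved_points A" using assms by (intro Min_in) auto
  then obtain x where x: "Min (c ` moved_points A) = c x" "x \<in> moved_points A" by (rule imageE)
  have "a y = y" if "a \<in> A" "c y < c x" for a y
  proof (rule ccontr)
    assume "a y \<noteq> y"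
    then have "y \<in> moved_points A" using that(1) by (auto simp: moved_points_def)
    then have "c x \<le> c y" using x(1) assms(1) by (metis Min_le finite_imageI imageI)
    then show False using that(2) by simp
  qed
  with x(2) show ?thesis by (rule that)
qed

theorem iso_to_subgroup_of_Sym_if_quotient_of_automorphisms:
  assumes cg: "colored_graph V E c k" and cb: "circle_bounded t V E c k"
    and S: "simple_group S" and nonabelian: "\<not> comm_group S"
    and q: "quotient_of_subgroup S (Perm V) A" and A: "A \<subseteq> automorphisms V E c"
  shows "iso_to_subgroup_of_Sym S t"
proof -
  have fin: "finite V" using cg by (simp add: colored_graph_def)
  show ?thesis
  proof (rule quotient_of_subgroup_Perm_induct[OF S fin q, where P = "\<lambda>A. A \<subseteq> automorphisms V E c"])
    fix A assume "quotient_of_subgroup S (Perm V) A" and A: "A \<subseteq> automorphisms V E c"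
      and moved: "moved_points A \<noteq> {}"
    have moved_V: "moved_points A \<subseteq> V"
      using A by (intro moved_points_subset) (auto simp: automorphisms_def)
    then obtain x where x: "x \<in> moved_points A" and fixed: "\<And>a y. a \<in> A \<Longrightarrow> c y < c x \<Longrightarrow> a y = y"
      using moved_point_of_least_colour[of A c] moved fin finite_subset by blast
    define i where "i = c x"
    define X where "X = nbhd V E x \<inter> color_below V c i"
    define \<Delta> where "\<Delta> = GiX V E c i X"
    have \<Delta>_V: "\<Delta> \<subseteq> V" by (auto simp: \<Delta>_def GiX_def color_class_def)
    have "x \<in> \<Delta>" using x moved_V by (auto simp: \<Delta>_def GiX_def color_class_def X_def i_def)
    have invariant: "\<forall>a\<in>A. a ` \<Delta> \<subseteq> \<Delta>"
      using automorphism_image_GiX fixed A unfolding \<Delta>_def color_below_def i_def by blast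
    have "quotient_of_subgroup S (Perm \<Delta>) ((\<lambda>a. perm_restrict a \<Delta>) ` A) \<longrightarrow> iso_to_subgroup_of_Sym S t"
    proof
      assume q\<Delta>: "quotient_of_subgroup S (Perm \<Delta>) ((\<lambda>a. perm_restrict a \<Delta>) ` A)"
      have "i \<in> {1..k}" using cg x moved_V by (auto simp: colored_graph_def i_def)
      then have "few_paths_cycles t E \<Delta>"
        using cb unfolding circle_bounded_def \<Delta>_def X_def by blast
      then show "iso_to_subgroup_of_Sym S t"
      proof (rule iso_to_subgroup_of_Sym_if_quotient_of_graph_auts[OF finite_subset[OF \<Delta>_V fin] _ S
            nonabelian q\<Delta>])
        fix b assume "b \<in> (\<lambda>a. perm_restrict a \<Delta>) ` A"
        then show "graph_aut E \<Delta> b"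
          using graph_aut_perm_restrict[OF graph_aut_if_automorphism \<Delta>_V finite_subset[OF \<Delta>_V fin]]
            A invariant by blast
      qed
    qed
    then show "\<exists>\<Delta>\<subseteq>V. \<Delta> \<inter> moved_points A \<noteq> {} \<and> (\<forall>a\<in>A. a ` \<Delta> \<subseteq> \<Delta>) \<and>
        (quotient_of_subgroup S (Perm \<Delta>) ((\<lambda>a. perm_restrict a \<Delta>) ` A) \<longrightarrow> iso_to_subgroup_of_Sym S t)"
      using \<Delta>_V \<open>x \<in> \<Delta>\<close> x(1) invariant by blast
  qed (use A in blast)+
qed

lemma subgroup_automorphisms: "subgroup (automorphisms V E c) (Perm V)"
proof (rule subgroup_PermI)
  show "p \<circ> q \<in> automorphisms V E c" if "p \<in> automorphisms V E c" "q \<in> automorphisms V E c" for p q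
    using that permutes_compose[of q V p] permutes_in_image[of q V] by (simp add: automorphisms_def)
  show "inv' p \<in> automorphisms V E c" if "p \<in> automorphisms V E c" for p
  proof -
    have p: "p permutes V" "\<And>u v. u \<in> V \<Longrightarrow> v \<in> V \<Longrightarrow> {p u, p v} \<in> E \<longleftrightarrow> {u, v} \<in> E"
      "\<And>v. v \<in> V \<Longrightarrow> c (p v) = c v"
      using that by (auto simp: automorphisms_def)
    have inv_V: "inv' p v \<in> V" if "v \<in> V" for v
      using permutes_in_image[OF permutes_inv[OF p(1)]] that by simp
    show ?thesis
      using permutes_inv[OF p(1)] p(2)[OF inv_V inv_V] p(3)[OF inv_V] permutes_inverses(1)[OF p(1)]
      by (simp add: automorphisms_def)
  qed
qed (auto simp: automorphisms_def permutes_id)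

lemma composition_factor_quotient_of_subgroup:
  assumes "F \<in> composition_factors G"
  obtains H where "simple_group F" "quotient_of_subgroup F G H"
proof -
  obtain Hs i where cs: "composition_series G Hs" and i: "Suc i < length Hs"
    and F: "F = G\<lparr>carrier := Hs ! Suc i\<rparr> Mod (Hs ! i)"
    using assms unfolding composition_factors_def by blast
  let ?H = "Hs ! Suc i"
  have "?H \<in> set Hs" using i by simp
  then have subgroup: "subgroup ?H G" using cs by (simp add: composition_series_def)
  have normal: "Hs ! i \<lhd> G\<lparr>carrier := ?H\<rparr>" and "simple_group F"
    using cs i F by (simp_all add: composition_series_def)
  have "(\<lambda>a. Hs ! i #>\<^bsub>G\<lparr>carrier := ?H\<rparr>\<^esub> a) \<in> hom (G\<lparr>carrier := ?H\<rparr>) F"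
    using normal.r_coset_hom_Mod[OF normal] F by simp
  moreover have "(\<lambda>a. Hs ! i #>\<^bsub>G\<lparr>carrier := ?H\<rparr>\<^esub> a) ` ?H = carrier F"
    using F by (auto simp: FactGroup_def RCOSETS_def)
  ultimately have "quotient_of_subgroup F G ?H"
    using subgroup unfolding quotient_of_subgroup_def by blast
  with \<open>simple_group F\<close> show ?thesis by (rule that)
qed

theorem mainTheorem2:
  fixes t k :: nat and V :: "'a set" and E :: "'a set set" and c :: "'a \<Rightarrow> nat"
  assumes "colored_graph V E c k"
    and "circle_bounded t V E c k"
  shows "Gamma t (Aut V E c)"
proof -
  have Aut: "Aut V E c = (Perm V)\<lparr>carrier := automorphisms V E c\<rparr>"
    by (simp add: Aut_def perm_group_def)
  have finite: "finite (carrier (Aut V E c))"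
    using assms(1) finite_permutations[of V] by (auto simp: colored_graph_def Aut_def automorphisms_def
        intro: finite_subset)
  have "iso_to_subgroup_of_Sym F t"
    if F: "F \<in> composition_factors (Aut V E c)" and nonabelian: "\<not> comm_group F" for F
  proof -
    obtain H where "simple_group F" and q: "quotient_of_subgroup F (Aut V E c) H"
      using composition_factor_quotient_of_subgroup[OF F] .
    have sub: "subgroup H ((Perm V)\<lparr>carrier := automorphisms V E c\<rparr>)"
      using q unfolding quotient_of_subgroup_def Aut by blast
    then have "H \<subseteq> automorphisms V E c" using subgroup.subset by fastforce
    moreover have "quotient_of_subgroup F (Perm V) H"
      using q group.incl_subgroup[OF group_Perm subgroup_automorphisms sub]
      unfolding quotient_of_subgroup_def Aut by simp
    ultimately show ?thesis
      using iso_to_subgroup_of_Sym_if_quotient_of_automorphisms[OF assms \<open>simple_group F\<close> nonabelian] by blast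
  qed
  then show ?thesis
    using group_perm_group[OF subgroup_automorphisms] finite unfolding Gamma_def Aut by simp
qed

end
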